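(* Assume all of the following: - Assumption 1: $\{Y(0),Y(1)\}\perp\!\!\!\perp A\mid X$, and $\epsilon<\mathbb{P}(A=1\mid X=x)<1-\epsilon$ for all $x$, for some constant $0<\epsilon<1/2$. - Condition 1: $\Psi(\beta)$ is continuously differentiable in $\beta$ near $\beta^\dagger$; $\beta\in[0,M]$ with $\beta^\dagger$ interior to $[0,M]$; and $|\partial\Psi(\beta^\dagger)/\partial\beta|\ge c>0$. - Condition 2: for every $\beta$, the random variable $\tau(X)-\beta\,\mathrm{THR}_U(X)$ has a bounded density. - Condition 3: $\max_{1\le k\le K}\|\hat\tau^{(-k)}-\tau\|_\infty=O_{\mathbb P}(a_N)$ and $\max_{1\le k\le K}\|\widehat{\mathrm{THR}}_U^{(-k)}-\mathrm{THR}_U\|_\infty=O_{\mathbb P}(r_N)$, where $a_N$ and $r_N$ are positive sequences converging to $0$. Then $$U(\pi^\dagger_\lambda)-U(\hat\pi^\dagger_\lambda)\le O_{\mathbb P}(a_N^2\vee r_N^2\vee N^{-1}),$$ where $a\vee b=\max\{a,b\}$.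
   Context: Setting. Tuples $\{X,A,Y(1),Y(0)\}$ are drawn from a superpopulation, with binary treatment $A$ and binary potential outcomes $Y(a)\in\{0,1\}$. The observed outcome is $Y=AY(1)+(1-A)Y(0)$, and we observe an i.i.d. sample $\{(X_i,A_i,Y_i)\}_{i=1}^N$. Notation: - $\mu_a(x)=\mathbb{E}(Y\mid A=a,X=x)$. - $\tau(x)=\mathbb{E}\{Y(1)-Y(0)\mid X=x\}=\mu_1(x)-\mu_0(x)$. - $\mathrm{THR}_U(x)=\min\{\mu_0(x),1-\mu_1(x)\}$. - $\lambda$ is a fixed threshold. - $\Psi(\beta)=\mathbb{E}[\mathrm{THR}_U(X)\,\mathbb{I}\{\tau(X)-\beta\,\mathrm{THR}_U(X)>0\}]-\lambda$, and $\beta^\dagger$ solves $\Psi(\beta)=0$. - Target rule: $\pi^\dagger_\lambda(x)=\mathbb{I}\{\tau(x)-\beta^\dagger\,\mathrm{THR}_U(x)>0\}$. Estimation procedure. - Split $\{1,\dots,N\}$ at random into $K$ folds $\mathcal I_1,\dots,\mathcal I_K$ of size $N/K$, with $K$ fixed. - $\hat\tau^{(-k)}$ and $\widehat{\mathrm{THR}}_U^{(-k)}$ are estimators fitted on the complement of $\mathcal I_k$. - $\hat\beta^{(k)}\in[0,M]$ solves $$|\mathcal I_k|^{-1}\sum_{i\in\mathcal I_k}\widehat{\mathrm{THR}}_U^{(-k)}(X_i)\,\mathbb{I}\{\hat\tau^{(-k)}(X_i)-\beta\,\widehat{\mathrm{THR}}_U^{(-k)}(X_i)>0\}=\lambda .$$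 - For a fixed fold $k$, the estimated rule is $$\hat\pi^\dagger_\lambda(x)=\mathbb{I}\{\hat\tau^{(-k)}(x)-\hat\beta^{(k)}\,\widehat{\mathrm{THR}}_U^{(-k)}(x)>0\}.$$ Utility. $U(\pi)=\mathbb{E}[\pi(X)\{\tau(X)-\beta^\dagger\,\mathrm{THR}_U(X)\}]$, with the expectation over $X$ only and the rule held fixed. *)

theory Defs
  imports "HOL-Probability.Probability"
begin

text \<open>An observation (X, A, Y).\<close>
type_synonym 'x obs = "'x \<times> bool \<times> bool"

text \<open>Superpopulation of (X, (A, Y(0), Y(1))): X has law PX, and given X = x the triple
  (A, Y(0), Y(1)) has the (regular conditional) law kappa x.\<close>
definition superpop :: "'x measure \<Rightarrow> ('x \<Rightarrow> (bool \<times> bool \<times> bool) pmf) \<Rightarrow> ('x \<times> (bool \<times> bool \<times> bool)) measure" where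
  "superpop PX \<kappa> = density (PX \<Otimes>\<^sub>M count_space UNIV) (\<lambda>(x, t). ennreal (pmf (\<kappa> x) t))"

definition obs_of :: "'x \<times> (bool \<times> bool \<times> bool) \<Rightarrow> 'x obs" where
  "obs_of = (\<lambda>(x, a, y0, y1). (x, a, if a then y1 else y0))"

definition obs_dist :: "'x measure \<Rightarrow> ('x \<Rightarrow> (bool \<times> bool \<times> bool) pmf) \<Rightarrow> 'x obs measure" where
  "obs_dist PX \<kappa> = distr (superpop PX \<kappa>) (PX \<Otimes>\<^sub>M count_space UNIV \<Otimes>\<^sub>M count_space UNIV) obs_of"

definition sample_space :: "'x measure \<Rightarrow> ('x \<Rightarrow> (bool \<times> bool \<times> bool) pmf) \<Rightarrow> nat \<Rightarrow> (nat \<Rightarrow> 'x obs) measure" where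
  "sample_space PX \<kappa> N = PiM {..<N} (\<lambda>_. obs_dist PX \<kappa>)"

definition propensity :: "('x \<Rightarrow> (bool \<times> bool \<times> bool) pmf) \<Rightarrow> 'x \<Rightarrow> real" where
  "propensity \<kappa> x = measure_pmf.prob (\<kappa> x) {(a, y0, y1). a}"

text \<open>mu_a(x) = E(Y | A = a, X = x).\<close>
definition mu :: "('x \<Rightarrow> (bool \<times> bool \<times> bool) pmf) \<Rightarrow> bool \<Rightarrow> 'x \<Rightarrow> real" where
  "mu \<kappa> a x =
     measure_pmf.prob (\<kappa> x) {(a', y0, y1). a' = a \<and> (if a' then y1 else y0)}
     / measure_pmf.prob (\<kappa> x) {(a', y0, y1). a' = a}"

definition tau :: "('x \<Rightarrow> (bool \<times> bool \<times> bool) pmf) \<Rightarrow> 'x \<Rightarrow> real" where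
  "tau \<kappa> x = measure_pmf.expectation (\<kappa> x) (\<lambda>(a, y0, y1). of_bool y1 - of_bool y0)"

definition THR :: "('x \<Rightarrow> (bool \<times> bool \<times> bool) pmf) \<Rightarrow> 'x \<Rightarrow> real" where
  "THR \<kappa> x = min (mu \<kappa> False x) (1 - mu \<kappa> True x)"

definition Psi :: "'x measure \<Rightarrow> ('x \<Rightarrow> (bool \<times> bool \<times> bool) pmf) \<Rightarrow> real \<Rightarrow> real \<Rightarrow> real" where
  "Psi PX \<kappa> lam \<beta> = (\<integral>x. THR \<kappa> x * of_bool (tau \<kappa> x - \<beta> * THR \<kappa> x > 0) \<partial>PX) - lam"

definition rule :: "('x \<Rightarrow> real) \<Rightarrow> ('x \<Rightarrow> real) \<Rightarrow> real \<Rightarrow> 'x \<Rightarrow> real" where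
  "rule t h \<beta> x = of_bool (t x - \<beta> * h x > 0)"

definition utility :: "'x measure \<Rightarrow> ('x \<Rightarrow> (bool \<times> bool \<times> bool) pmf) \<Rightarrow> real \<Rightarrow> ('x \<Rightarrow> real) \<Rightarrow> real" where
  "utility PX \<kappa> \<beta>d \<pi> = (\<integral>x. \<pi> x * (tau \<kappa> x - \<beta>d * THR \<kappa> x) \<partial>PX)"

definition fold_set :: "(nat \<Rightarrow> nat) \<Rightarrow> nat \<Rightarrow> nat \<Rightarrow> nat set" where
  "fold_set fld N k = {i. i < N \<and> fld i = k}"

text \<open>Empirical estimating function on fold I (before subtracting lambda).\<close>
definition Psi_hat :: "nat set \<Rightarrow> ('x \<Rightarrow> real) \<Rightarrow> ('x \<Rightarrow> real) \<Rightarrow> (nat \<Rightarrow> 'x obs) \<Rightarrow> real \<Rightarrow> real" where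
  "Psi_hat I h t \<omega> \<beta> =
     (\<Sum>i\<in>I. h (fst (\<omega> i)) * of_bool (t (fst (\<omega> i)) - \<beta> * h (fst (\<omega> i)) > 0)) / real (card I)"

definition sup_dist :: "'x measure \<Rightarrow> ('x \<Rightarrow> real) \<Rightarrow> ('x \<Rightarrow> real) \<Rightarrow> ereal" where
  "sup_dist PX f g = (SUP x\<in>space PX. ereal \<bar>f x - g x\<bar>)"

text \<open>Z_N \<le> O_P(r_N): for every eta > 0 there are C and N0 such that for N \<ge> N0 the event
  {Z_N > C r_N} has (outer) probability < eta.\<close>
definition OP_upper :: "(nat \<Rightarrow> 'w measure) \<Rightarrow> (nat \<Rightarrow> 'w \<Rightarrow> ereal) \<Rightarrow> (nat \<Rightarrow> real) \<Rightarrow> bool" where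
  "OP_upper \<Omega> Z r \<longleftrightarrow>
     (\<forall>\<eta>>0. \<exists>C N0. \<forall>N\<ge>N0. \<exists>E\<in>sets (\<Omega> N).
        {\<omega>\<in>space (\<Omega> N). Z N \<omega> > ereal (C * r N)} \<subseteq> E \<and> measure (\<Omega> N) E < \<eta>)"

end

theory Submission
  imports Defs
begin

text \<open>
  If the nuisance estimates are within \<open>\<alpha>\<close> and \<open>\<rho>\<close> of \<open>tau\<close> and \<open>THR\<close> in sup-norm and the
  threshold is \<open>b \<in> [0, M]\<close>, the estimated index \<open>tauhat - b THRhat\<close> is within
  \<open>D = \<alpha> + M \<rho> + \<bar>b - \<beta>d\<bar>\<close> of \<open>Z = tau - \<beta>d THR\<close>. The two rules can only disagree where
  \<open>\<bar>Z\<bar> \<le> D\<close>, and there at most \<open>D\<close> of utility is lost; as \<open>Z\<close> has a density bounded by \<open>B\<close>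
  (Condition 2), the regret is at most \<open>2 B D\<^sup>2\<close>.

  It remains to show \<open>\<bar>betahat - \<beta>d\<bar> = O\<^sub>P(a\<^sub>N + r\<^sub>N + 1 / \<surd>N)\<close>. Since \<open>Psi\<close> is decreasing
  and crosses zero at \<open>\<beta>d\<close> with slope at most \<open>-c\<close> (Condition 1), the population estimating
  function of the estimated nuisances lies on the correct side of \<open>lam\<close> by some \<open>\<epsilon>\<close> at
  \<open>\<beta>d \<plusminus> t\<close>, as soon as \<open>t\<close> is a suitable multiple of \<open>\<alpha> + \<rho> + \<epsilon>\<close>. Conditionally on the
  training folds, the fold average \<open>Psi_hat\<close> at a fixed \<open>\<beta>\<close> is a mean of about \<open>N / K\<close> i.i.d.
  bounded terms, so by Hoeffding's inequality it deviates by \<open>\<epsilon> \<sim> 1 / \<surd>N\<close> only with small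
  probability; off that event the monotone estimating equation forces \<open>\<bar>betahat - \<beta>d\<bar> \<le> t\<close>.
\<close>

section \<open>The data-generating model\<close>

lemma tau_eq_sum:
  "tau \<kappa> x = (\<Sum>(a, y0, y1)\<in>UNIV. (of_bool y1 - of_bool y0) * pmf (\<kappa> x) (a, y0, y1))"
  unfolding tau_def by (subst integral_measure_pmf[where A=UNIV]) (auto simp: case_prod_unfold mult.commute)

lemma abs_tau_le_1: "\<bar>tau \<kappa> x\<bar> \<le> 1"
proof -
  have "\<bar>tau \<kappa> x\<bar> \<le> (\<Sum>(a, y0, y1)\<in>UNIV. \<bar>(of_bool y1 - of_bool y0) * pmf (\<kappa> x) (a, y0, y1)\<bar>)"
    unfolding tau_eq_sum case_prod_unfold by (rule sum_abs)
  also have "\<dots> \<le> (\<Sum>t\<in>UNIV. pmf (\<kappa> x) t)"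
    by (intro sum_mono) (auto simp: abs_mult)
  also have "\<dots> = 1" by (rule sum_pmf_eq_1) auto
  finally show ?thesis .
qed

lemma mu_bounds: "0 \<le> mu \<kappa> a x" "mu \<kappa> a x \<le> 1"
proof -
  let ?p = "measure_pmf.prob (\<kappa> x) {(a', y0, y1). a' = a \<and> (if a' then y1 else y0)}"
  let ?q = "measure_pmf.prob (\<kappa> x) {(a', y0, y1). a' = a}"
  have "?p \<le> ?q" by (rule measure_pmf.finite_measure_mono) auto
  then show "0 \<le> mu \<kappa> a x" "mu \<kappa> a x \<le> 1"
    unfolding mu_def by (simp, smt (verit) divide_le_eq_1 measure_nonneg)
qed

lemma THR_bounds: "0 \<le> THR \<kappa> x" "THR \<kappa> x \<le> 1"
  using mu_bounds[of \<kappa> False x] mu_bounds[of \<kappa> True x] unfolding THR_def by auto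

lemma borel_measurable_tau:
  assumes "\<And>t. (\<lambda>x. pmf (\<kappa> x) t) \<in> borel_measurable PX"
  shows "tau \<kappa> \<in> borel_measurable PX"
  unfolding tau_eq_sum[abs_def] case_prod_unfold using assms by measurable

lemma borel_measurable_THR:
  assumes "\<And>t. (\<lambda>x. pmf (\<kappa> x) t) \<in> borel_measurable PX"
  shows "THR \<kappa> \<in> borel_measurable PX"
proof -
  have "mu \<kappa> a \<in> borel_measurable PX" for a
    unfolding mu_def[abs_def] measure_measure_pmf_finite[OF finite] using assms by measurable
  then show ?thesis unfolding THR_def[abs_def] by measurable
qed

lemma sets_obs_dist: "sets (obs_dist PX \<kappa>) = sets (PX \<Otimes>\<^sub>M count_space UNIV \<Otimes>\<^sub>M count_space UNIV)"
  by (simp add: obs_dist_def)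

lemma space_obs_dist: "space (obs_dist PX \<kappa>) = space PX \<times> UNIV"
  by (simp add: obs_dist_def space_pair_measure)

lemma measurable_fst_obs_dist: "fst \<in> measurable (obs_dist PX \<kappa>) PX"
  unfolding measurable_cong_sets[OF sets_obs_dist refl] by (rule measurable_fst)

lemma distr_fst_obs_dist:
  assumes \<kappa>: "\<And>t. (\<lambda>x. pmf (\<kappa> x) t) \<in> borel_measurable PX"
  shows "distr (obs_dist PX \<kappa>) PX fst = PX"
proof -
  let ?C = "count_space UNIV :: (bool \<times> bool \<times> bool) measure"
  interpret C: sigma_finite_measure ?C by (rule sigma_finite_measure_count_space_finite) simp
  have dens: "(\<lambda>(x, t). ennreal (pmf (\<kappa> x) t)) \<in> borel_measurable (PX \<Otimes>\<^sub>M ?C)"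
    unfolding case_prod_unfold
    by (rule measurable_compose_countable'[where I=UNIV and g=snd
        and f="\<lambda>t z. ennreal (pmf (\<kappa> (fst z)) t)"]) (use \<kappa> in simp_all)
  have "(\<lambda>t::bool \<times> bool \<times> bool. (fst t, if fst t then snd (snd t) else fst (snd t)))
      \<in> measurable ?C (count_space UNIV \<Otimes>\<^sub>M count_space UNIV)"
    by (simp add: measurable_count_space_eq1 space_pair_measure)
  from measurable_Pair[OF measurable_fst measurable_compose[OF measurable_snd this]]
  have obs_of: "obs_of \<in> measurable (PX \<Otimes>\<^sub>M ?C) (PX \<Otimes>\<^sub>M count_space UNIV \<Otimes>\<^sub>M count_space UNIV)"
    by (simp add: obs_of_def case_prod_unfold)
  have "distr (obs_dist PX \<kappa>) PX fst = distr (superpop PX \<kappa>) PX fst"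
    unfolding obs_dist_def using obs_of
    by (subst distr_distr) (auto simp: superpop_def comp_def obs_of_def case_prod_unfold)
  also have "\<dots> = PX"
  proof (rule measure_eqI)
    fix A assume "A \<in> sets (distr (superpop PX \<kappa>) PX fst)"
    then have A: "A \<in> sets PX" by simp
    have "emeasure (distr (superpop PX \<kappa>) PX fst) A = emeasure (superpop PX \<kappa>) (A \<times> UNIV)"
      using A sets.sets_into_space[OF A]
      by (subst emeasure_distr) (auto simp: superpop_def space_pair_measure intro!: arg_cong2[where f=emeasure])
    also have "\<dots> = (\<integral>\<^sup>+x. \<integral>\<^sup>+t. indicator A x * ennreal (pmf (\<kappa> x) t) \<partial>?C \<partial>PX)"
      unfolding superpop_def using dens A
      by (subst emeasure_density) (auto simp: C.nn_integral_fst[symmetric] indicator_times case_prod_unfold mult.commute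
          intro!: nn_integral_cong)
    also have "\<dots> = (\<integral>\<^sup>+x. indicator A x \<partial>PX)"
      by (intro nn_integral_cong)
        (simp add: nn_integral_cmult nn_integral_count_space_finite sum_ennreal sum_pmf_eq_1)
    also have "\<dots> = emeasure PX A" using A by simp
    finally show "emeasure (distr (superpop PX \<kappa>) PX fst) A = emeasure PX A" .
  qed simp
  finally show ?thesis .
qed

lemma prob_space_obs_dist:
  assumes "prob_space PX" "\<And>t. (\<lambda>x. pmf (\<kappa> x) t) \<in> borel_measurable PX"
  shows "prob_space (obs_dist PX \<kappa>)"
  using prob_space_distrD[OF measurable_fst_obs_dist] assms distr_fst_obs_dist by metis

lemma integral_obs_dist_fst:
  fixes h :: "'x \<Rightarrow> real"
  assumes "\<And>t. (\<lambda>x. pmf (\<kappa> x) t) \<in> borel_measurable PX" and "h \<in> borel_measurable PX"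
  shows "(\<integral>z. h (fst z) \<partial>obs_dist PX \<kappa>) = (\<integral>x. h x \<partial>PX)"
  using integral_distr[OF measurable_fst_obs_dist[of PX \<kappa>] assms(2)] distr_fst_obs_dist[OF assms(1)] by simp

section \<open>Concentration of a fold average\<close>

lemma indep_vars_PiM_components:
  assumes P: "prob_space P" and I: "I \<noteq> {}"
  shows "prob_space.indep_vars (PiM I (\<lambda>_. P)) (\<lambda>_. P) (\<lambda>i \<omega>. \<omega> i) I"
proof -
  interpret Q: prob_space "PiM I (\<lambda>_. P)" by (rule prob_space_PiM) (simp add: P)
  have "distr (PiM I (\<lambda>_. P)) (PiM I (\<lambda>_. P)) (\<lambda>\<omega>. \<lambda>i\<in>I. \<omega> i) = PiM I (\<lambda>_. P)"
    by (subst distr_cong[where g="\<lambda>\<omega>. \<omega>"]) (auto simp: space_PiM)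
  also have "\<dots> = PiM I (\<lambda>i. distr (PiM I (\<lambda>_. P)) P (\<lambda>\<omega>. \<omega> i))"
    using P distr_PiM_component[of I "\<lambda>_. P"] by (intro PiM_cong) simp_all
  finally show ?thesis
    using I by (subst Q.indep_vars_iff_distr_eq_PiM') auto
qed

lemma exp_neg_le_inverse: "y > 0 \<Longrightarrow> exp (- y) \<le> 1 / (y::real)"
  using exp_ge_add_one_self[of y] by (simp add: exp_minus field_simps del: exp_ge_add_one_self)

lemma measure_PiM_mean_deviation_le:
  fixes g :: "'a \<Rightarrow> real" and b \<epsilon> :: real
  assumes P: "prob_space P" and I: "finite I" "I \<noteq> {}"
    and g[measurable]: "g \<in> borel_measurable P" and g_bound: "\<And>z. z \<in> space P \<Longrightarrow> \<bar>g z\<bar> \<le> b"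
    and b: "b > 0" and \<epsilon>: "\<epsilon> > 0"
  shows "measure (PiM I (\<lambda>_. P))
           {\<omega> \<in> space (PiM I (\<lambda>_. P)). \<epsilon> \<le> \<bar>(\<Sum>i\<in>I. g (\<omega> i)) / card I - (\<integral>z. g z \<partial>P)\<bar>}
         \<le> 4 * b\<^sup>2 / (card I * \<epsilon>\<^sup>2)"
proof -
  let ?Q = "PiM I (\<lambda>_. P)"
  interpret Q: prob_space ?Q by (rule prob_space_PiM) (simp add: P)
  obtain i0 where i0: "i0 \<in> I" using I by blast
  have distr_g: "distr ?Q borel (\<lambda>\<omega>. g (\<omega> i)) = distr P borel g" if "i \<in> I" for i
  proof -
    have "distr ?Q borel (\<lambda>\<omega>. g (\<omega> i)) = distr (distr ?Q P (\<lambda>\<omega>. \<omega> i)) borel g"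
      using that by (subst distr_distr) (auto simp: comp_def)
    then show ?thesis using that P distr_PiM_component[of I "\<lambda>_. P" i] by simp
  qed
  interpret H: Hoeffding_ineq_iid ?Q I "\<lambda>i \<omega>. g (\<omega> i)" "\<lambda>\<omega>. g (\<omega> i0)" "- b" b "Q.expectation (\<lambda>\<omega>. g (\<omega> i0))"
  proof unfold_locales
    show "Q.indep_vars (\<lambda>_. borel) (\<lambda>i \<omega>. g (\<omega> i)) I"
      using Q.indep_vars_compose2[OF indep_vars_PiM_components[OF P I(2)], of "\<lambda>_. g"] by simp
    show "AE \<omega> in ?Q. g (\<omega> i0) \<in> {- b..b}"
      using g_bound i0 by (intro AE_I2) (force simp: space_PiM abs_le_iff)
    show "finite I" by (rule I(1))
    show "\<And>i. i \<in> I \<Longrightarrow> distr ?Q borel (\<lambda>\<omega>. g (\<omega> i)) = distr ?Q borel (\<lambda>\<omega>. g (\<omega> i0))"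
      using i0 distr_g by simp
    show "(\<lambda>\<omega>. g (\<omega> i0)) \<in> borel_measurable ?Q"
      using measurable_compose[OF measurable_component_singleton[OF i0] g] .
  qed
  let ?n = "real (card I)"
  have n: "?n > 0" using I by (simp add: card_gt_0_iff)
  have mean: "Q.expectation (\<lambda>\<omega>. g (\<omega> i0)) = (\<integral>z. g z \<partial>P)"
  proof -
    have "distr ?Q P (\<lambda>\<omega>. \<omega> i0) = P"
      using i0 P by (intro distr_PiM_component)
    then show ?thesis
      using integral_distr[OF measurable_component_singleton[OF i0] g] by (simp only:)
  qed
  have "measure ?Q {\<omega> \<in> space ?Q. \<epsilon> \<le> \<bar>(\<Sum>i\<in>I. g (\<omega> i)) / card I - (\<integral>z. g z \<partial>P)\<bar>}
      \<le> 2 * exp (- (?n * \<epsilon>\<^sup>2 / (2 * b\<^sup>2)))"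
  proof -
    have "2 * ?n * \<epsilon>\<^sup>2 / (b - - b)\<^sup>2 = ?n * \<epsilon>\<^sup>2 / (2 * b\<^sup>2)"
      using b by (simp add: power2_eq_square)
    moreover have "- b < b" using b by simp
    ultimately show ?thesis
      using H.Hoeffding_ineq_abs_ge'[of \<epsilon>] \<epsilon> I(2) unfolding mean by simp
  qed
  also have "\<dots> \<le> 2 * (1 / (?n * \<epsilon>\<^sup>2 / (2 * b\<^sup>2)))"
    using n \<epsilon> b by (intro mult_left_mono exp_neg_le_inverse) auto
  also have "\<dots> = 4 * b\<^sup>2 / (card I * \<epsilon>\<^sup>2)"
    using n \<epsilon> b by (simp add: field_simps)
  finally show ?thesis .
qed

lemma measure_PiM_le_if_slices_le:
  assumes P: "prob_space P" and IJ: "finite I" "finite J" "I \<inter> J = {}"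
    and F: "F \<in> sets (PiM (I \<union> J) (\<lambda>_. P))"
    and slices: "\<And>y. y \<in> space (PiM J (\<lambda>_. P)) \<Longrightarrow>
       measure (PiM I (\<lambda>_. P)) {x \<in> space (PiM I (\<lambda>_. P)). merge I J (x, y) \<in> F} \<le> \<delta>"
  shows "measure (PiM (I \<union> J) (\<lambda>_. P)) F \<le> \<delta>"
proof -
  interpret product_sigma_finite "\<lambda>_. P"
    by (simp add: product_sigma_finite_def prob_space_imp_sigma_finite P)
  interpret QI: prob_space "PiM I (\<lambda>_. P)" by (rule prob_space_PiM) (simp add: P)
  interpret QJ: prob_space "PiM J (\<lambda>_. P)" by (rule prob_space_PiM) (simp add: P)
  interpret QIJ: prob_space "PiM (I \<union> J) (\<lambda>_. P)" by (rule prob_space_PiM) (simp add: P)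
  obtain y0 where "y0 \<in> space (PiM J (\<lambda>_. P))" using QJ.not_empty by blast
  then have "0 \<le> \<delta>" using slices measure_nonneg order_trans by blast
  have slice_eq: "(\<lambda>x. merge J I (y, x)) -` F \<inter> space (PiM I (\<lambda>_. P))
      = {x \<in> space (PiM I (\<lambda>_. P)). merge I J (x, y) \<in> F}" for y
    using merge_commute[OF IJ(3), of _ y] by auto
  have "emeasure (PiM (J \<union> I) (\<lambda>_. P)) F
      = (\<integral>\<^sup>+y. emeasure (PiM I (\<lambda>_. P)) ((\<lambda>x. merge J I (y, x)) -` F \<inter> space (PiM I (\<lambda>_. P))) \<partial>PiM J (\<lambda>_. P))"
    using IJ F by (intro emeasure_fold_integral) (auto simp: Un_commute)
  also have "\<dots> \<le> (\<integral>\<^sup>+y. ennreal \<delta> \<partial>PiM J (\<lambda>_. P))"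
    using slices by (intro nn_integral_mono) (simp add: slice_eq QI.emeasure_eq_measure ennreal_leI)
  also have "\<dots> = ennreal \<delta>" by (simp add: QJ.emeasure_space_1)
  finally show ?thesis
    using \<open>0 \<le> \<delta>\<close> by (simp add: Un_commute QIJ.emeasure_eq_measure)
qed

text \<open>Conditionally on the coordinates in \<open>J\<close>, on which the statistic \<open>f \<omega>\<close> depends, the fold \<open>I\<close>
  is still an i.i.d. sample; integrate the Hoeffding bound over the slices.\<close>
lemma measure_PiM_split_sample_deviation_le:
  fixes f :: "('i \<Rightarrow> 'a) \<Rightarrow> 'a \<Rightarrow> real" and b \<epsilon> :: real
  assumes P: "prob_space P" and IJ: "finite I" "finite J" "I \<inter> J = {}" "I \<noteq> {}"
    and F: "F \<in> sets (PiM (I \<union> J) (\<lambda>_. P))"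
    and f_local: "\<And>\<omega> \<omega>'. \<omega> \<in> space (PiM (I \<union> J) (\<lambda>_. P)) \<Longrightarrow> \<omega>' \<in> space (PiM (I \<union> J) (\<lambda>_. P)) \<Longrightarrow>
       (\<forall>j\<in>J. \<omega> j = \<omega>' j) \<Longrightarrow> f \<omega> = f \<omega>'"
    and f_meas: "\<And>\<omega>. \<omega> \<in> space (PiM (I \<union> J) (\<lambda>_. P)) \<Longrightarrow> f \<omega> \<in> borel_measurable P"
    and f_bound: "\<And>\<omega> z. \<omega> \<in> F \<Longrightarrow> z \<in> space P \<Longrightarrow> \<bar>f \<omega> z\<bar> \<le> b"
    and deviates: "\<And>\<omega>. \<omega> \<in> F \<Longrightarrow> \<epsilon> \<le> \<bar>(\<Sum>i\<in>I. f \<omega> (\<omega> i)) / card I - (\<integral>z. f \<omega> z \<partial>P)\<bar>"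
    and b: "b > 0" and \<epsilon>: "\<epsilon> > 0"
  shows "measure (PiM (I \<union> J) (\<lambda>_. P)) F \<le> 4 * b\<^sup>2 / (card I * \<epsilon>\<^sup>2)"
proof (rule measure_PiM_le_if_slices_le[OF P IJ(1-3) F])
  fix y assume y: "y \<in> space (PiM J (\<lambda>_. P))"
  let ?slice = "{x \<in> space (PiM I (\<lambda>_. P)). merge I J (x, y) \<in> F}"
  have merge_space: "merge I J (x, y) \<in> space (PiM (I \<union> J) (\<lambda>_. P))"
    if "x \<in> space (PiM I (\<lambda>_. P))" for x
    using that y by (auto simp: space_PiM PiE_def merge_def extensional_def)
  show "measure (PiM I (\<lambda>_. P)) ?slice \<le> 4 * b\<^sup>2 / (card I * \<epsilon>\<^sup>2)"
  proof (cases "?slice = {}")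
    case True
    then show ?thesis by (simp only: measure_empty) simp
  next
    case False
    then obtain x1 where x1: "x1 \<in> space (PiM I (\<lambda>_. P))" "merge I J (x1, y) \<in> F" by blast
    define g where "g = f (merge I J (x1, y))"
    have f_eq: "f (merge I J (x, y)) = g" if "x \<in> space (PiM I (\<lambda>_. P))" for x
      unfolding g_def using IJ(3) by (intro f_local merge_space that x1(1)) (auto simp: merge_def)
    have g_meas: "g \<in> borel_measurable P"
      unfolding g_def by (intro f_meas merge_space x1(1))
    have "(\<lambda>x. \<Sum>i\<in>I. g (x i)) \<in> borel_measurable (PiM I (\<lambda>_. P))"
      by (intro borel_measurable_sum measurable_compose[where N=P, OF _ g_meas] measurable_component_singleton)
    then have dev_sets: "{x \<in> space (PiM I (\<lambda>_. P)). \<epsilon> \<le> \<bar>(\<Sum>i\<in>I. g (x i)) / card I - (\<integral>z. g z \<partial>P)\<bar>}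
        \<in> sets (PiM I (\<lambda>_. P))"
      by measurable
    have "?slice \<subseteq> {x \<in> space (PiM I (\<lambda>_. P)). \<epsilon> \<le> \<bar>(\<Sum>i\<in>I. g (x i)) / card I - (\<integral>z. g z \<partial>P)\<bar>}"
    proof safe
      fix x assume x: "x \<in> space (PiM I (\<lambda>_. P))" "merge I J (x, y) \<in> F"
      have "(\<Sum>i\<in>I. g (merge I J (x, y) i)) = (\<Sum>i\<in>I. g (x i))"
        by (intro sum.cong) (auto simp: merge_def)
      then show "\<epsilon> \<le> \<bar>(\<Sum>i\<in>I. g (x i)) / card I - (\<integral>z. g z \<partial>P)\<bar>"
        using deviates[OF x(2)] f_eq[OF x(1)] by simp
    qed
    then have "measure (PiM I (\<lambda>_. P)) ?slice
        \<le> measure (PiM I (\<lambda>_. P)) {x \<in> space (PiM I (\<lambda>_. P)). \<epsilon> \<le> \<bar>(\<Sum>i\<in>I. g (x i)) / card I - (\<integral>z. g z \<partial>P)\<bar>}"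
      using dev_sets by (intro finite_measure.finite_measure_mono prob_space.finite_measure prob_space_PiM P)
    also have "\<dots> \<le> 4 * b\<^sup>2 / (card I * \<epsilon>\<^sup>2)"
      using f_bound[OF x1(2)] by (intro measure_PiM_mean_deviation_le[OF P IJ(1,4) g_meas _ b \<epsilon>]) (simp add: g_def)
    finally show ?thesis .
  qed
qed

section \<open>The estimating function\<close>

lemma integral_of_bool_eq_measure: "(\<integral>x. of_bool (P x) \<partial>M) = measure M {x \<in> space M. P x}"
proof -
  have "(\<lambda>x. of_bool (P x) :: real) = indicator {x. P x}" by (simp add: fun_eq_iff indicator_def)
  then show ?thesis by (simp add: Int_def conj_commute)
qed

lemma measure_abs_le_bounded_density:
  fixes Z :: "'a \<Rightarrow> real"
  assumes M: "prob_space M" and Z: "Z \<in> borel_measurable M"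
    and f: "f \<in> borel_measurable lborel" "\<And>t. 0 \<le> f t \<and> f t \<le> B"
    and density: "distr M lborel Z = density lborel (\<lambda>t. ennreal (f t))"
    and u: "u \<ge> 0"
  shows "measure M {x \<in> space M. \<bar>Z x\<bar> \<le> u} \<le> 2 * B * u"
proof -
  interpret prob_space M by (fact M)
  have "B \<ge> 0" using f(2) order_trans by blast
  have "{x \<in> space M. \<bar>Z x\<bar> \<le> u} = Z -` {-u..u} \<inter> space M" by auto
  then have "emeasure M {x \<in> space M. \<bar>Z x\<bar> \<le> u} = emeasure (distr M lborel Z) {-u..u}"
    using Z by (simp add: emeasure_distr measurable_cong_sets[OF refl sets_lborel])
  also have "\<dots> = (\<integral>\<^sup>+t. ennreal (f t) * indicator {-u..u} t \<partial>lborel)"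
    unfolding density using f by (simp add: emeasure_density nn_integral_set_ennreal)
  also have "\<dots> \<le> (\<integral>\<^sup>+t. ennreal B * indicator {-u..u} t \<partial>lborel)"
    using f by (intro nn_integral_mono) (simp add: indicator_def ennreal_leI)
  also have "\<dots> = ennreal (2 * B * u)"
    using u \<open>B \<ge> 0\<close> by (simp add: nn_integral_cmult_indicator ennreal_mult[symmetric] mult_ac)
  finally show ?thesis
    using u \<open>B \<ge> 0\<close> by (simp add: emeasure_eq_measure)
qed

definition weighted_rule_mean :: "'x measure \<Rightarrow> ('x \<Rightarrow> real) \<Rightarrow> ('x \<Rightarrow> real) \<Rightarrow> real \<Rightarrow> real" where
  "weighted_rule_mean PX t h \<beta> = (\<integral>x. h x * rule t h \<beta> x \<partial>PX)"

lemma Psi_eq_weighted_rule_mean: "Psi PX \<kappa> lam \<beta> = weighted_rule_mean PX (tau \<kappa>) (THR \<kappa>) \<beta> - lam"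
  by (simp add: Psi_def weighted_rule_mean_def rule_def)

lemma integrable_weighted_rule:
  fixes t h :: "'x \<Rightarrow> real"
  assumes "prob_space PX" "t \<in> borel_measurable PX" "h \<in> borel_measurable PX"
    and h_bound: "\<And>x. x \<in> space PX \<Longrightarrow> \<bar>h x\<bar> \<le> b"
  shows "integrable PX (\<lambda>x. h x * rule t h \<beta> x)"
proof -
  have "\<bar>h x * rule t h \<beta> x\<bar> \<le> b" if "x \<in> space PX" for x
    using h_bound[OF that] by (simp add: rule_def abs_mult order_trans[OF abs_ge_zero])
  then show ?thesis
    using assms unfolding rule_def
    by (intro finite_measure.integrable_const_bound[where B=b] prob_space.finite_measure AE_I2) auto
qed

lemma Psi_antimono:
  assumes "prob_space PX" "\<And>t. (\<lambda>x. pmf (\<kappa> x) t) \<in> borel_measurable PX"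
  shows "antimono (Psi PX \<kappa> lam)"
proof (rule antimonoI)
  fix \<beta> \<beta>' :: real assume "\<beta> \<le> \<beta>'"
  then have "THR \<kappa> x * rule (tau \<kappa>) (THR \<kappa>) \<beta>' x \<le> THR \<kappa> x * rule (tau \<kappa>) (THR \<kappa>) \<beta> x" for x
    using THR_bounds[of \<kappa> x] mult_right_mono[OF \<open>\<beta> \<le> \<beta>'\<close>, of "THR \<kappa> x"]
    by (auto simp: rule_def)
  moreover have "integrable PX (\<lambda>x. THR \<kappa> x * rule (tau \<kappa>) (THR \<kappa>) b x)" for b
    using assms THR_bounds[of \<kappa>]
    by (intro integrable_weighted_rule[where b=1] borel_measurable_tau borel_measurable_THR) auto
  ultimately show "Psi PX \<kappa> lam \<beta>' \<le> Psi PX \<kappa> lam \<beta>"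
    unfolding Psi_eq_weighted_rule_mean weighted_rule_mean_def
    by (intro diff_right_mono integral_mono)
qed

lemma has_real_derivative_antimono_nonpos:
  fixes f :: "real \<Rightarrow> real"
  assumes "antimono f" and "(f has_real_derivative D) (at x)"
  shows "D \<le> 0"
proof (rule ccontr)
  assume "\<not> D \<le> 0"
  then obtain d where "d > 0" "\<And>h. 0 < h \<Longrightarrow> h < d \<Longrightarrow> f x < f (x + h)"
    using DERIV_pos_inc_right[OF assms(2)] by force
  then have "f x < f (x + d / 2)" by simp
  moreover have "f (x + d / 2) \<le> f x" using \<open>antimono f\<close> \<open>d > 0\<close> by (simp add: antimonoD)
  ultimately show False by simp
qed

lemma has_real_derivative_root_linear_bounds:
  fixes f :: "real \<Rightarrow> real"
  assumes "(f has_real_derivative D) (at x)" and "f x = 0" and "D \<le> - c" and "c > 0"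
  obtains \<delta> where "\<delta> > 0"
    and "\<And>h. 0 < h \<Longrightarrow> h < \<delta> \<Longrightarrow> f (x + h) \<le> - (c * h / 2) \<and> c * h / 2 \<le> f (x - h)"
proof -
  obtain \<delta> where \<delta>: "\<delta> > 0"
    and close: "\<And>h. h \<noteq> 0 \<Longrightarrow> \<bar>h\<bar> < \<delta> \<Longrightarrow> \<bar>(f (x + h) - f x) / h - D\<bar> < c / 2"
    using LIM_D[OF DERIV_D[OF assms(1)], of "c / 2"] \<open>c > 0\<close> by force
  show ?thesis
  proof (rule that[OF \<delta>])
    fix h :: real assume h: "0 < h" "h < \<delta>"
    have "\<bar>f (x + h) / h - D\<bar> < c / 2" "\<bar>f (x - h) / (- h) - D\<bar> < c / 2"
      using close[of h] close[of "- h"] h \<open>f x = 0\<close> by simp_all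
    moreover have "f (x - h) / (- h) = - (f (x - h) / h)" by simp
    ultimately have "f (x + h) / h < - c / 2" "c / 2 < f (x - h) / h"
      using \<open>D \<le> - c\<close> unfolding abs_less_iff by linarith+
    then show "f (x + h) \<le> - (c * h / 2) \<and> c * h / 2 \<le> f (x - h)"
      using h by (simp add: pos_divide_less_eq pos_less_divide_eq)
  qed
qed

lemma Psi_linear_crossing:
  assumes PX: "prob_space PX" and \<kappa>: "\<And>t. (\<lambda>x. pmf (\<kappa> x) t) \<in> borel_measurable PX"
    and root: "Psi PX \<kappa> lam \<beta>d = 0"
    and deriv: "(Psi PX \<kappa> lam has_real_derivative D) (at \<beta>d)" and D: "\<bar>D\<bar> \<ge> c" and c: "c > 0"
  obtains \<delta> where "\<delta> > 0" and "\<And>h. 0 < h \<Longrightarrow> h < \<delta> \<Longrightarrow>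
    Psi PX \<kappa> lam (\<beta>d + h) \<le> - (c * h / 2) \<and> c * h / 2 \<le> Psi PX \<kappa> lam (\<beta>d - h)"
proof -
  have "D \<le> 0" by (rule has_real_derivative_antimono_nonpos[OF Psi_antimono[OF PX \<kappa>] deriv])
  with D have "D \<le> - c" by linarith
  from has_real_derivative_root_linear_bounds[OF deriv root this c] that show ?thesis by blast
qed

section \<open>Perturbation of the rule\<close>

lemma abs_plug_in_index_error:
  fixes th ta hh T b \<alpha> \<rho> M :: real
  assumes "\<bar>th - ta\<bar> \<le> \<alpha>" "\<bar>hh - T\<bar> \<le> \<rho>" "0 \<le> b" "b \<le> M"
  shows "\<bar>(th - b * hh) - (ta - b * T)\<bar> \<le> \<alpha> + M * \<rho>"
proof -
  have "\<bar>b * (hh - T)\<bar> \<le> M * \<rho>"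
    unfolding abs_mult using assms(2-4) by (intro mult_mono) auto
  then show ?thesis
    using assms(1) by (simp add: algebra_simps abs_le_iff)
qed

lemma gain_lost_by_sign_error:
  fixes z zh D :: real
  assumes "\<bar>zh - z\<bar> \<le> D"
  shows "of_bool (z > 0) * z - of_bool (zh > 0) * z \<le> D * of_bool (\<bar>z\<bar> \<le> D)"
  using assms by (auto simp: abs_le_iff)

text \<open>Where the estimated rule at \<open>\<beta> + t\<close> is on but the true rule at \<open>\<beta> + t / 2\<close> is off, the
  weight \<open>T\<close> is below \<open>2 s / t\<close> and \<open>ta - \<beta> T\<close> lies in the margin; the lower bound is symmetric.\<close>
lemma weighted_rule_upper_pointwise:
  fixes T ta th hh \<alpha> \<rho> \<beta> t M :: real
  defines "s \<equiv> \<alpha> + M * \<rho>"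
  assumes T: "0 \<le> T" "T \<le> 1" and err: "\<bar>th - ta\<bar> \<le> \<alpha>" "\<bar>hh - T\<bar> \<le> \<rho>"
    and \<beta>: "0 \<le> \<beta>" "\<beta> + t \<le> M" and t: "t > 0"
  shows "hh * of_bool (th - (\<beta> + t) * hh > 0)
    \<le> \<rho> + T * of_bool (ta - (\<beta> + t / 2) * T > 0) + (2 * s / t) * of_bool (\<bar>ta - \<beta> * T\<bar> \<le> s + t)"
proof -
  have "s \<ge> 0" unfolding s_def using err \<beta> t by (intro add_nonneg_nonneg mult_nonneg_nonneg) auto
  have rhs_ge_rho: "\<rho> + T * of_bool (ta - (\<beta> + t / 2) * T > 0) + (2 * s / t) * of_bool (\<bar>ta - \<beta> * T\<bar> \<le> s + t) \<ge> \<rho>"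
    using T t \<open>s \<ge> 0\<close> by simp
  show ?thesis
  proof (cases "th - (\<beta> + t) * hh > 0")
    case False
    then show ?thesis using rhs_ge_rho err(2) by simp
  next
    case True
    then have lower: "ta - \<beta> * T - t * T > - s"
      using abs_plug_in_index_error[OF err, of "\<beta> + t" M] \<beta> t by (simp add: s_def abs_le_iff algebra_simps)
    have lhs: "hh * of_bool (th - (\<beta> + t) * hh > 0) \<le> T + \<rho>" using True err(2) by simp
    show ?thesis
    proof (cases "ta - (\<beta> + t / 2) * T > 0")
      case True
      have "0 \<le> (2 * s / t) * of_bool (\<bar>ta - \<beta> * T\<bar> \<le> s + t)" using t \<open>s \<ge> 0\<close> by simp
      then show ?thesis using lhs True by simp
    next
      case False
      then have upper: "ta - \<beta> * T \<le> t * T / 2" by (simp add: algebra_simps)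
      have "t * T \<le> t" "0 \<le> t * T" using T t by simp_all
      then have "T \<le> 2 * s / t" and "\<bar>ta - \<beta> * T\<bar> \<le> s + t"
        using lower upper t by (simp_all add: field_simps abs_le_iff)
      then show ?thesis using lhs False by simp
    qed
  qed
qed

lemma weighted_rule_lower_pointwise:
  fixes T ta th hh \<alpha> \<rho> \<beta> t M :: real
  defines "s \<equiv> \<alpha> + M * \<rho>"
  assumes T: "0 \<le> T" "T \<le> 1" and err: "\<bar>th - ta\<bar> \<le> \<alpha>" "\<bar>hh - T\<bar> \<le> \<rho>"
    and \<beta>: "0 \<le> \<beta> - t" "\<beta> \<le> M" and t: "t > 0"
  shows "- \<rho> + T * of_bool (ta - (\<beta> - t / 2) * T > 0) - (2 * s / t) * of_bool (\<bar>ta - \<beta> * T\<bar> \<le> s + t)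
    \<le> hh * of_bool (th - (\<beta> - t) * hh > 0)"
proof -
  have "s \<ge> 0" unfolding s_def using err \<beta> t by (intro add_nonneg_nonneg mult_nonneg_nonneg) auto
  then have gap_nonneg: "0 \<le> (2 * s / t) * of_bool (\<bar>ta - \<beta> * T\<bar> \<le> s + t)" using t by simp
  have rhs: "- \<rho> \<le> hh * of_bool (th - (\<beta> - t) * hh > 0)"
    using T err(2) abs_ge_zero[of "hh - T"] by (simp add: abs_le_iff)
  show ?thesis
  proof (cases "ta - (\<beta> - t) * T > s")
    case True
    then have "th - (\<beta> - t) * hh > 0"
      using abs_plug_in_index_error[OF err, of "\<beta> - t" M] \<beta> t by (simp add: s_def abs_le_iff)
    moreover have "T * of_bool (ta - (\<beta> - t / 2) * T > 0) \<le> T" using T by simp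
    ultimately show ?thesis using gap_nonneg err(2) by simp
  next
    case upper: False
    show ?thesis
    proof (cases "ta - (\<beta> - t / 2) * T > 0")
      case False
      then show ?thesis using gap_nonneg rhs by simp
    next
      case lower: True
      have "t * T \<le> t" "0 \<le> t * T" using T t by simp_all
      then have "T \<le> 2 * s / t" and "\<bar>ta - \<beta> * T\<bar> \<le> s + t"
        using lower upper t by (simp_all add: field_simps abs_le_iff)
      then show ?thesis using rhs lower by simp
    qed
  qed
qed

lemma integral_le_plus_margin:
  fixes f g Z :: "'a \<Rightarrow> real"
  assumes M: "prob_space M" and f: "integrable M f" and g: "integrable M g"
    and Z: "Z \<in> borel_measurable M"
    and pointwise: "\<And>x. x \<in> space M \<Longrightarrow> f x \<le> \<rho> + g x + C * of_bool (\<bar>Z x\<bar> \<le> u)"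
    and C: "C \<ge> 0" and margin: "measure M {x \<in> space M. \<bar>Z x\<bar> \<le> u} \<le> m"
  shows "(\<integral>x. f x \<partial>M) \<le> \<rho> + (\<integral>x. g x \<partial>M) + C * m"
proof -
  interpret prob_space M by (fact M)
  have ind: "integrable M (\<lambda>x. of_bool (\<bar>Z x\<bar> \<le> u) :: real)"
    using Z by (intro integrable_const_bound[where B=1] AE_I2) auto
  have "(\<integral>x. f x \<partial>M) \<le> (\<integral>x. \<rho> + g x + C * of_bool (\<bar>Z x\<bar> \<le> u) \<partial>M)"
    using f g ind pointwise by (intro integral_mono) auto
  also have "\<dots> = \<rho> + (\<integral>x. g x \<partial>M) + C * measure M {x \<in> space M. \<bar>Z x\<bar> \<le> u}"
    using g ind by (simp add: integral_of_bool_eq_measure prob_space)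
  also have "\<dots> \<le> \<rho> + (\<integral>x. g x \<partial>M) + C * m"
    using margin C by (simp add: mult_left_mono)
  finally show ?thesis .
qed

lemma weighted_rule_mean_upper:
  fixes \<tau> h th hh :: "'x \<Rightarrow> real" and \<alpha> \<rho> \<beta> t M m :: real
  defines "s \<equiv> \<alpha> + M * \<rho>"
  assumes PX: "prob_space PX"
    and meas: "\<tau> \<in> borel_measurable PX" "h \<in> borel_measurable PX"
      "th \<in> borel_measurable PX" "hh \<in> borel_measurable PX"
    and h: "\<And>x. x \<in> space PX \<Longrightarrow> 0 \<le> h x \<and> h x \<le> 1"
    and err: "\<And>x. x \<in> space PX \<Longrightarrow> \<bar>th x - \<tau> x\<bar> \<le> \<alpha> \<and> \<bar>hh x - h x\<bar> \<le> \<rho>"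
    and \<alpha>\<rho>: "0 \<le> \<alpha>" "0 \<le> \<rho>" and \<beta>: "0 \<le> \<beta>" "\<beta> + t \<le> M" and t: "t > 0"
    and margin: "measure PX {x \<in> space PX. \<bar>\<tau> x - \<beta> * h x\<bar> \<le> s + t} \<le> m"
  shows "weighted_rule_mean PX th hh (\<beta> + t) \<le> \<rho> + weighted_rule_mean PX \<tau> h (\<beta> + t / 2) + (2 * s / t) * m"
  unfolding weighted_rule_mean_def
proof (rule integral_le_plus_margin[OF PX _ _ _ _ _ margin])
  have "\<bar>hh x\<bar> \<le> 1 + \<rho>" if "x \<in> space PX" for x
    using h[OF that] err[OF that] by (auto simp: abs_le_iff)
  then show "integrable PX (\<lambda>x. hh x * rule th hh (\<beta> + t) x)"
    using PX meas by (intro integrable_weighted_rule)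
  show "integrable PX (\<lambda>x. h x * rule \<tau> h (\<beta> + t / 2) x)"
    using PX meas h by (intro integrable_weighted_rule[where b=1]) auto
  show "(\<lambda>x. \<tau> x - \<beta> * h x) \<in> borel_measurable PX" using meas by measurable
  show "0 \<le> 2 * s / t"
    using \<alpha>\<rho> \<beta> t by (simp add: s_def)
  fix x assume "x \<in> space PX"
  then show "hh x * rule th hh (\<beta> + t) x
      \<le> \<rho> + h x * rule \<tau> h (\<beta> + t / 2) x + 2 * s / t * of_bool (\<bar>\<tau> x - \<beta> * h x\<bar> \<le> s + t)"
    using weighted_rule_upper_pointwise[of "h x" "th x" "\<tau> x" \<alpha> "hh x" \<rho> \<beta> t M] h err \<beta> t
    by (simp add: rule_def s_def)
qed

lemma weighted_rule_mean_lower: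
  fixes \<tau> h th hh :: "'x \<Rightarrow> real" and \<alpha> \<rho> \<beta> t M m :: real
  defines "s \<equiv> \<alpha> + M * \<rho>"
  assumes PX: "prob_space PX"
    and meas: "\<tau> \<in> borel_measurable PX" "h \<in> borel_measurable PX"
      "th \<in> borel_measurable PX" "hh \<in> borel_measurable PX"
    and h: "\<And>x. x \<in> space PX \<Longrightarrow> 0 \<le> h x \<and> h x \<le> 1"
    and err: "\<And>x. x \<in> space PX \<Longrightarrow> \<bar>th x - \<tau> x\<bar> \<le> \<alpha> \<and> \<bar>hh x - h x\<bar> \<le> \<rho>"
    and \<alpha>\<rho>: "0 \<le> \<alpha>" "0 \<le> \<rho>" and \<beta>: "0 \<le> \<beta> - t" "\<beta> \<le> M" and t: "t > 0"
    and margin: "measure PX {x \<in> space PX. \<bar>\<tau> x - \<beta> * h x\<bar> \<le> s + t} \<le> m"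
  shows "weighted_rule_mean PX \<tau> h (\<beta> - t / 2) - \<rho> - (2 * s / t) * m \<le> weighted_rule_mean PX th hh (\<beta> - t)"
proof -
  have "(\<integral>x. - (hh x * rule th hh (\<beta> - t) x) \<partial>PX)
      \<le> \<rho> + (\<integral>x. - (h x * rule \<tau> h (\<beta> - t / 2) x) \<partial>PX) + (2 * s / t) * m"
  proof (rule integral_le_plus_margin[OF PX _ _ _ _ _ margin])
    have "\<bar>hh x\<bar> \<le> 1 + \<rho>" if "x \<in> space PX" for x
      using h[OF that] err[OF that] by (auto simp: abs_le_iff)
    then show "integrable PX (\<lambda>x. - (hh x * rule th hh (\<beta> - t) x))"
      using PX meas by (intro integrable_minus integrable_weighted_rule)
    show "integrable PX (\<lambda>x. - (h x * rule \<tau> h (\<beta> - t / 2) x))"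
      using PX meas h by (intro integrable_minus integrable_weighted_rule[where b=1]) auto
    show "(\<lambda>x. \<tau> x - \<beta> * h x) \<in> borel_measurable PX" using meas by measurable
    show "0 \<le> 2 * s / t"
      using \<alpha>\<rho> \<beta> t by (simp add: s_def)
    fix x assume "x \<in> space PX"
    then show "- (hh x * rule th hh (\<beta> - t) x)
        \<le> \<rho> + - (h x * rule \<tau> h (\<beta> - t / 2) x) + 2 * s / t * of_bool (\<bar>\<tau> x - \<beta> * h x\<bar> \<le> s + t)"
      using weighted_rule_lower_pointwise[of "h x" "th x" "\<tau> x" \<alpha> "hh x" \<rho> \<beta> t M] h err \<beta> t
      by (simp add: rule_def s_def)
  qed
  then show ?thesis by (simp add: weighted_rule_mean_def)
qed

definition regret :: "'x measure \<Rightarrow> ('x \<Rightarrow> (bool \<times> bool \<times> bool) pmf) \<Rightarrow> real \<Rightarrow>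
    ('x \<Rightarrow> real) \<Rightarrow> ('x \<Rightarrow> real) \<Rightarrow> real \<Rightarrow> real" where
  "regret PX \<kappa> \<beta>d th hh b =
     utility PX \<kappa> \<beta>d (rule (tau \<kappa>) (THR \<kappa>) \<beta>d) - utility PX \<kappa> \<beta>d (rule th hh b)"

lemma regret_le_margin_mass:
  fixes th hh :: "'x \<Rightarrow> real" and \<alpha> \<rho> b \<beta>d t M m :: real
  defines "D \<equiv> \<alpha> + M * \<rho> + t"
  assumes PX: "prob_space PX" and \<kappa>: "\<And>t. (\<lambda>x. pmf (\<kappa> x) t) \<in> borel_measurable PX"
    and meas: "th \<in> borel_measurable PX" "hh \<in> borel_measurable PX"
    and err: "\<And>x. x \<in> space PX \<Longrightarrow> \<bar>th x - tau \<kappa> x\<bar> \<le> \<alpha> \<and> \<bar>hh x - THR \<kappa> x\<bar> \<le> \<rho>"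
    and \<alpha>\<rho>: "0 \<le> \<alpha>" "0 \<le> \<rho>" and b: "0 \<le> b" "b \<le> M" "\<bar>b - \<beta>d\<bar> \<le> t"
    and margin: "measure PX {x \<in> space PX. \<bar>tau \<kappa> x - \<beta>d * THR \<kappa> x\<bar> \<le> D} \<le> m"
  shows "regret PX \<kappa> \<beta>d th hh b \<le> D * m"
proof -
  let ?Z = "\<lambda>x. tau \<kappa> x - \<beta>d * THR \<kappa> x"
  have [measurable]: "tau \<kappa> \<in> borel_measurable PX" "THR \<kappa> \<in> borel_measurable PX"
    using \<kappa> by (simp_all add: borel_measurable_tau borel_measurable_THR)
  have integrable: "integrable PX (\<lambda>x. rule t' h' b' x * ?Z x)"
    if "t' \<in> borel_measurable PX" "h' \<in> borel_measurable PX" for t' h' b'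
  proof -
    have "\<bar>rule t' h' b' x * ?Z x\<bar> \<le> 1 + \<bar>\<beta>d\<bar>" for x
    proof -
      have "\<bar>\<beta>d * THR \<kappa> x\<bar> \<le> \<bar>\<beta>d\<bar>"
        using THR_bounds[of \<kappa> x] by (simp add: abs_mult mult_left_le)
      then have "\<bar>?Z x\<bar> \<le> 1 + \<bar>\<beta>d\<bar>" using abs_tau_le_1[of \<kappa> x] by linarith
      then show ?thesis by (simp add: rule_def)
    qed
    then show ?thesis
      using PX that unfolding rule_def
      by (intro finite_measure.integrable_const_bound[where B="1 + \<bar>\<beta>d\<bar>"] prob_space.finite_measure AE_I2) auto
  qed
  have "(\<integral>x. rule (tau \<kappa>) (THR \<kappa>) \<beta>d x * ?Z x - rule th hh b x * ?Z x \<partial>PX) \<le> 0 + (\<integral>x. 0 \<partial>PX) + D * m"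
  proof (rule integral_le_plus_margin[OF PX _ _ _ _ _ margin])
    fix x assume x: "x \<in> space PX"
    have "\<bar>(b - \<beta>d) * THR \<kappa> x\<bar> \<le> t"
      using b(3) THR_bounds[of \<kappa> x] mult_left_le[of "THR \<kappa> x" "\<bar>b - \<beta>d\<bar>"]
      by (simp add: abs_mult)
    then have "\<bar>(th x - b * hh x) - ?Z x\<bar> \<le> D"
      using abs_plug_in_index_error[of "th x" "tau \<kappa> x" \<alpha> "hh x" "THR \<kappa> x" \<rho> b M] err[OF x] b
      by (simp add: D_def abs_le_iff algebra_simps)
    from gain_lost_by_sign_error[OF this]
    show "rule (tau \<kappa>) (THR \<kappa>) \<beta>d x * ?Z x - rule th hh b x * ?Z x \<le> 0 + 0 + D * of_bool (\<bar>?Z x\<bar> \<le> D)"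
      by (simp add: rule_def)
  next
    show "integrable PX (\<lambda>x. rule (tau \<kappa>) (THR \<kappa>) \<beta>d x * ?Z x - rule th hh b x * ?Z x)"
      using integrable meas by simp
    show "?Z \<in> borel_measurable PX" by measurable
    show "0 \<le> D" using \<alpha>\<rho> b unfolding D_def by simp
  qed simp
  moreover have "regret PX \<kappa> \<beta>d th hh b
      = (\<integral>x. rule (tau \<kappa>) (THR \<kappa>) \<beta>d x * ?Z x - rule th hh b x * ?Z x \<partial>PX)"
    unfolding regret_def utility_def
    by (rule Bochner_Integration.integral_diff[symmetric]; rule integrable) (simp_all add: meas)
  ultimately show ?thesis by simp
qed

section \<open>Localisation of the estimated root\<close>

definition bracket_width :: "real \<Rightarrow> real \<Rightarrow> real \<Rightarrow> real \<Rightarrow> real \<Rightarrow> real" where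
  "bracket_width c B s \<rho> \<epsilon> = 4 / c * (\<rho> + 8 * B * s + \<epsilon>) + 2 * s"

lemma bracket_width_slack:
  fixes c B s \<rho> \<epsilon> :: real
  defines "t \<equiv> bracket_width c B s \<rho> \<epsilon>"
  assumes "c > 0" "B \<ge> 0" "s \<ge> 0" "\<rho> \<ge> 0" "\<epsilon> > 0"
  shows "t > 0" and "2 * s \<le> t" and "\<rho> + (2 * s / t) * (2 * B * (s + t)) + \<epsilon> \<le> c * (t / 2) / 2"
proof -
  have "0 \<le> 8 * B * s" using assms by simp
  then have "0 < \<rho> + 8 * B * s + \<epsilon>" using assms by linarith
  then have "4 / c * (\<rho> + 8 * B * s + \<epsilon>) > 0" using assms by simp
  then show "t > 0" and "2 * s \<le> t" using assms by (simp_all add: t_def bracket_width_def)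
  have "(2 * s / t) * (2 * B * (s + t)) \<le> 6 * B * s"
    using \<open>2 * s \<le> t\<close> \<open>t > 0\<close> assms mult_left_mono[of "2 * s" t "2 * B * s"] by (simp add: field_simps)
  moreover have "c * (t / 2) / 2 = \<rho> + 8 * B * s + \<epsilon> + c * s / 2"
    using assms by (simp add: t_def bracket_width_def field_simps)
  moreover have "0 \<le> B * s" "0 \<le> c * s" using assms by simp_all
  ultimately show "\<rho> + (2 * s / t) * (2 * B * (s + t)) + \<epsilon> \<le> c * (t / 2) / 2"
    by linarith
qed

text \<open>The decrease of \<open>Psi\<close> over \<open>t / 2\<close> dominates both the nuisance error and the margin term.\<close>
lemma weighted_rule_mean_outside_bracket:
  fixes th hh :: "'x \<Rightarrow> real" and \<alpha> \<rho> \<epsilon> c B M \<beta>d lam :: real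
  defines "t \<equiv> bracket_width c B (\<alpha> + M * \<rho>) \<rho> \<epsilon>"
  assumes PX: "prob_space PX" and \<kappa>: "\<And>t. (\<lambda>x. pmf (\<kappa> x) t) \<in> borel_measurable PX"
    and meas: "th \<in> borel_measurable PX" "hh \<in> borel_measurable PX"
    and err: "\<And>x. x \<in> space PX \<Longrightarrow> \<bar>th x - tau \<kappa> x\<bar> \<le> \<alpha> \<and> \<bar>hh x - THR \<kappa> x\<bar> \<le> \<rho>"
    and margin: "\<And>u. u \<ge> 0 \<Longrightarrow> measure PX {x \<in> space PX. \<bar>tau \<kappa> x - \<beta>d * THR \<kappa> x\<bar> \<le> u} \<le> 2 * B * u"
    and Psi_right: "Psi PX \<kappa> lam (\<beta>d + t / 2) \<le> - (c * (t / 2) / 2)"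
    and Psi_left: "c * (t / 2) / 2 \<le> Psi PX \<kappa> lam (\<beta>d - t / 2)"
    and t: "t \<le> \<beta>d" "\<beta>d + t \<le> M"
    and pos: "c > 0" "B \<ge> 0" "M \<ge> 0" "\<alpha> \<ge> 0" "\<rho> \<ge> 0" "\<epsilon> > 0"
  shows "weighted_rule_mean PX th hh (\<beta>d + t) \<le> lam - \<epsilon>"
    and "lam + \<epsilon> \<le> weighted_rule_mean PX th hh (\<beta>d - t)"
proof -
  let ?s = "\<alpha> + M * \<rho>"
  have "?s \<ge> 0" using pos by simp
  then have "t > 0" and slack: "\<rho> + (2 * ?s / t) * (2 * B * (?s + t)) + \<epsilon> \<le> c * (t / 2) / 2"
    using bracket_width_slack[of c B ?s \<rho> \<epsilon>] pos unfolding t_def by blast+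
  have true_meas: "tau \<kappa> \<in> borel_measurable PX" "THR \<kappa> \<in> borel_measurable PX"
    using \<kappa> by (simp_all add: borel_measurable_tau borel_measurable_THR)
  have margin_st: "measure PX {x \<in> space PX. \<bar>tau \<kappa> x - \<beta>d * THR \<kappa> x\<bar> \<le> ?s + t} \<le> 2 * B * (?s + t)"
    using \<open>t > 0\<close> \<open>?s \<ge> 0\<close> by (intro margin) simp
  have "weighted_rule_mean PX th hh (\<beta>d + t)
      \<le> \<rho> + weighted_rule_mean PX (tau \<kappa>) (THR \<kappa>) (\<beta>d + t / 2) + (2 * ?s / t) * (2 * B * (?s + t))"
    using PX true_meas meas THR_bounds err pos t \<open>t > 0\<close> margin_st
    by (intro weighted_rule_mean_upper) auto
  then show "weighted_rule_mean PX th hh (\<beta>d + t) \<le> lam - \<epsilon>"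
    using Psi_right slack by (simp add: Psi_eq_weighted_rule_mean)
  have "weighted_rule_mean PX (tau \<kappa>) (THR \<kappa>) (\<beta>d - t / 2) - \<rho> - (2 * ?s / t) * (2 * B * (?s + t))
      \<le> weighted_rule_mean PX th hh (\<beta>d - t)"
    using PX true_meas meas THR_bounds err pos t \<open>t > 0\<close> margin_st
    by (intro weighted_rule_mean_lower) auto
  then show "lam + \<epsilon> \<le> weighted_rule_mean PX th hh (\<beta>d - t)"
    using Psi_left slack by (simp add: Psi_eq_weighted_rule_mean)
qed

lemma measure_Psi_hat_deviation_le:
  fixes PX :: "'x measure" and \<kappa> :: "'x \<Rightarrow> (bool \<times> bool \<times> bool) pmf" and N :: nat
    and tf hf :: "(nat \<Rightarrow> 'x obs) \<Rightarrow> 'x \<Rightarrow> real" and b \<beta> \<epsilon> :: real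
  defines "S \<equiv> sample_space PX \<kappa> N"
  assumes PX: "prob_space PX" and \<kappa>: "\<And>t. (\<lambda>x. pmf (\<kappa> x) t) \<in> borel_measurable PX"
    and I: "I \<subseteq> {..<N}" "I \<noteq> {}" and F: "F \<in> sets S"
    and trained_off_fold: "\<And>\<omega> \<omega>'. \<omega> \<in> space S \<Longrightarrow> \<omega>' \<in> space S \<Longrightarrow> (\<forall>i\<in>{..<N} - I. \<omega> i = \<omega>' i) \<Longrightarrow>
       tf \<omega> = tf \<omega>' \<and> hf \<omega> = hf \<omega>'"
    and meas: "\<And>\<omega>. \<omega> \<in> space S \<Longrightarrow> tf \<omega> \<in> borel_measurable PX \<and> hf \<omega> \<in> borel_measurable PX"
    and bound: "\<And>\<omega> x. \<omega> \<in> F \<Longrightarrow> x \<in> space PX \<Longrightarrow> \<bar>hf \<omega> x\<bar> \<le> b"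
    and deviates: "\<And>\<omega>. \<omega> \<in> F \<Longrightarrow>
       \<epsilon> \<le> \<bar>Psi_hat I (hf \<omega>) (tf \<omega>) \<omega> \<beta> - weighted_rule_mean PX (tf \<omega>) (hf \<omega>) \<beta>\<bar>"
    and b: "b > 0" and \<epsilon>: "\<epsilon> > 0"
  shows "measure S F \<le> 4 * b\<^sup>2 / (card I * \<epsilon>\<^sup>2)"
proof -
  define J where "J = {..<N} - I"
  have IJ: "I \<union> J = {..<N}" "I \<inter> J = {}" using I by (auto simp: J_def)
  have S: "S = PiM (I \<union> J) (\<lambda>_. obs_dist PX \<kappa>)" by (simp add: S_def sample_space_def IJ)
  define f where "f = (\<lambda>\<omega> (z :: 'x obs). hf \<omega> (fst z) * rule (tf \<omega>) (hf \<omega>) \<beta> (fst z))"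
  have "measure (PiM (I \<union> J) (\<lambda>_. obs_dist PX \<kappa>)) F \<le> 4 * b\<^sup>2 / (card I * \<epsilon>\<^sup>2)"
  proof (rule measure_PiM_split_sample_deviation_le[OF prob_space_obs_dist[OF PX \<kappa>] _ _ IJ(2) I(2) _ _ _ _ _ b \<epsilon>])
    show "finite I" "finite J" using I by (auto simp: J_def intro: finite_subset)
    show "F \<in> sets (PiM (I \<union> J) (\<lambda>_. obs_dist PX \<kappa>))" using F S by simp
    show "f \<omega> = f \<omega>'" if "\<omega> \<in> space (PiM (I \<union> J) (\<lambda>_. obs_dist PX \<kappa>))"
      "\<omega>' \<in> space (PiM (I \<union> J) (\<lambda>_. obs_dist PX \<kappa>))" "\<forall>j\<in>J. \<omega> j = \<omega>' j" for \<omega> \<omega>'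
    proof -
      have "tf \<omega> = tf \<omega>' \<and> hf \<omega> = hf \<omega>'" using trained_off_fold[of \<omega> \<omega>'] that S by (simp add: J_def)
      then show ?thesis by (simp add: f_def)
    qed
    show "f \<omega> \<in> borel_measurable (obs_dist PX \<kappa>)" if "\<omega> \<in> space (PiM (I \<union> J) (\<lambda>_. obs_dist PX \<kappa>))" for \<omega>
    proof -
      have [measurable]: "tf \<omega> \<in> borel_measurable PX" "hf \<omega> \<in> borel_measurable PX"
        using meas[of \<omega>] that S by auto
      show ?thesis
        unfolding f_def rule_def by (intro measurable_compose[OF measurable_fst_obs_dist]) measurable
    qed
    show "\<bar>f \<omega> z\<bar> \<le> b" if "\<omega> \<in> F" "z \<in> space (obs_dist PX \<kappa>)" for \<omega> z
      using bound[OF that(1), of "fst z"] that(2) b by (auto simp: f_def rule_def space_obs_dist)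
    show "\<epsilon> \<le> \<bar>(\<Sum>i\<in>I. f \<omega> (\<omega> i)) / card I - (\<integral>z. f \<omega> z \<partial>obs_dist PX \<kappa>)\<bar>" if "\<omega> \<in> F" for \<omega>
    proof -
      have [measurable]: "tf \<omega> \<in> borel_measurable PX" "hf \<omega> \<in> borel_measurable PX"
        using meas[of \<omega>] sets.sets_into_space[OF F] that by auto
      have "(\<integral>z. f \<omega> z \<partial>obs_dist PX \<kappa>) = weighted_rule_mean PX (tf \<omega>) (hf \<omega>) \<beta>"
        unfolding f_def weighted_rule_mean_def
        by (rule integral_obs_dist_fst[OF \<kappa>]) (simp add: rule_def)
      then show ?thesis
        using deviates[OF that] by (simp add: Psi_hat_def f_def rule_def)
    qed
  qed
  then show ?thesis by (simp add: S)
qed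

text \<open>On the event \<open>G\<close> where the nuisance estimates are accurate, the estimated root can only leave
  the bracket \<open>\<beta>d \<plusminus> t\<close> if the fold average \<open>Psi_hat\<close> deviates by \<open>\<epsilon>\<close> from its conditional mean.\<close>
lemma measure_root_outside_bracket_le:
  fixes PX :: "'x measure" and \<kappa> :: "'x \<Rightarrow> (bool \<times> bool \<times> bool) pmf" and N :: nat
    and tf hf :: "(nat \<Rightarrow> 'x obs) \<Rightarrow> 'x \<Rightarrow> real" and bh :: "(nat \<Rightarrow> 'x obs) \<Rightarrow> real"
    and \<alpha> \<rho> \<epsilon> c B M \<beta>d lam :: real
  defines "S \<equiv> sample_space PX \<kappa> N" and "t \<equiv> bracket_width c B (\<alpha> + M * \<rho>) \<rho> \<epsilon>"
  assumes PX: "prob_space PX" and \<kappa>: "\<And>t. (\<lambda>x. pmf (\<kappa> x) t) \<in> borel_measurable PX"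
    and margin: "\<And>u. u \<ge> 0 \<Longrightarrow> measure PX {x \<in> space PX. \<bar>tau \<kappa> x - \<beta>d * THR \<kappa> x\<bar> \<le> u} \<le> 2 * B * u"
    and Psi_right: "Psi PX \<kappa> lam (\<beta>d + t / 2) \<le> - (c * (t / 2) / 2)"
    and Psi_left: "c * (t / 2) / 2 \<le> Psi PX \<kappa> lam (\<beta>d - t / 2)"
    and t: "t \<le> \<beta>d" "\<beta>d + t \<le> M"
    and pos: "c > 0" "B \<ge> 0" "M \<ge> 0" "\<alpha> \<ge> 0" "\<rho> \<ge> 0" "\<rho> \<le> 1" "\<epsilon> > 0"
    and I: "I \<subseteq> {..<N}" "I \<noteq> {}"
    and trained_off_fold: "\<And>\<omega> \<omega>'. \<omega> \<in> space S \<Longrightarrow> \<omega>' \<in> space S \<Longrightarrow> (\<forall>i\<in>{..<N} - I. \<omega> i = \<omega>' i) \<Longrightarrow>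
       tf \<omega> = tf \<omega>' \<and> hf \<omega> = hf \<omega>'"
    and meas: "\<And>\<omega>. \<omega> \<in> space S \<Longrightarrow> tf \<omega> \<in> borel_measurable PX \<and> hf \<omega> \<in> borel_measurable PX"
    and bh_meas: "bh \<in> borel_measurable S"
    and root: "\<And>\<omega> \<beta>. \<omega> \<in> space S \<Longrightarrow> \<beta> \<in> {0..M} \<Longrightarrow>
       (\<beta> < bh \<omega> \<longrightarrow> lam \<le> Psi_hat I (hf \<omega>) (tf \<omega>) \<omega> \<beta>) \<and> (bh \<omega> < \<beta> \<longrightarrow> Psi_hat I (hf \<omega>) (tf \<omega>) \<omega> \<beta> \<le> lam)"
    and G: "G \<in> sets S"
    and good: "\<And>\<omega> x. \<omega> \<in> G \<Longrightarrow> x \<in> space PX \<Longrightarrow> \<bar>tf \<omega> x - tau \<kappa> x\<bar> \<le> \<alpha> \<and> \<bar>hf \<omega> x - THR \<kappa> x\<bar> \<le> \<rho>"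
  shows "measure S {\<omega> \<in> G. t < \<bar>bh \<omega> - \<beta>d\<bar>} \<le> 32 / (card I * \<epsilon>\<^sup>2)"
proof -
  have "t > 0" using bracket_width_slack(1)[of c B "\<alpha> + M * \<rho>" \<rho> \<epsilon>] pos by (simp add: t_def)
  have G_space: "G \<subseteq> space S" using sets.sets_into_space[OF G] .
  have outside: "weighted_rule_mean PX (tf \<omega>) (hf \<omega>) (\<beta>d + t) \<le> lam - \<epsilon>"
      "lam + \<epsilon> \<le> weighted_rule_mean PX (tf \<omega>) (hf \<omega>) (\<beta>d - t)" if "\<omega> \<in> G" for \<omega>
    using weighted_rule_mean_outside_bracket[OF PX \<kappa> _ _ good[OF that] margin _ _ t[unfolded t_def] pos(1-5,7)]
      meas[of \<omega>] Psi_right Psi_left that G_space by (auto simp: t_def)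
  have hf_bound: "\<bar>hf \<omega> x\<bar> \<le> 2" if "\<omega> \<in> G" "x \<in> space PX" for \<omega> x
    using good[OF that] THR_bounds[of \<kappa> x] pos(6) by (auto simp: abs_le_iff)
  have [measurable]: "G \<in> sets S" "bh \<in> borel_measurable S" by (fact G bh_meas)+
  have right: "measure S {\<omega> \<in> G. \<beta>d + t < bh \<omega>} \<le> 4 * 2\<^sup>2 / (card I * \<epsilon>\<^sup>2)"
    unfolding S_def
  proof (rule measure_Psi_hat_deviation_le[OF PX \<kappa> I _ trained_off_fold meas _ _ _ pos(7)])
    show "{\<omega> \<in> G. \<beta>d + t < bh \<omega>} \<in> sets (sample_space PX \<kappa> N)"
      unfolding S_def[symmetric] using G_space by measurable
    fix \<omega> assume \<omega>: "\<omega> \<in> {\<omega> \<in> G. \<beta>d + t < bh \<omega>}"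
    then have "lam \<le> Psi_hat I (hf \<omega>) (tf \<omega>) \<omega> (\<beta>d + t)"
      using root[of \<omega> "\<beta>d + t"] G_space t \<open>t > 0\<close> by auto
    then show "\<epsilon> \<le> \<bar>Psi_hat I (hf \<omega>) (tf \<omega>) \<omega> (\<beta>d + t) - weighted_rule_mean PX (tf \<omega>) (hf \<omega>) (\<beta>d + t)\<bar>"
      using outside(1)[of \<omega>] \<omega> by simp
  qed (use hf_bound in \<open>auto simp: S_def\<close>)
  have left: "measure S {\<omega> \<in> G. bh \<omega> < \<beta>d - t} \<le> 4 * 2\<^sup>2 / (card I * \<epsilon>\<^sup>2)"
    unfolding S_def
  proof (rule measure_Psi_hat_deviation_le[OF PX \<kappa> I _ trained_off_fold meas _ _ _ pos(7)])
    show "{\<omega> \<in> G. bh \<omega> < \<beta>d - t} \<in> sets (sample_space PX \<kappa> N)"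
      unfolding S_def[symmetric] using G_space by measurable
    fix \<omega> assume \<omega>: "\<omega> \<in> {\<omega> \<in> G. bh \<omega> < \<beta>d - t}"
    then have "Psi_hat I (hf \<omega>) (tf \<omega>) \<omega> (\<beta>d - t) \<le> lam"
      using root[of \<omega> "\<beta>d - t"] G_space t \<open>t > 0\<close> by auto
    then show "\<epsilon> \<le> \<bar>Psi_hat I (hf \<omega>) (tf \<omega>) \<omega> (\<beta>d - t) - weighted_rule_mean PX (tf \<omega>) (hf \<omega>) (\<beta>d - t)\<bar>"
      using outside(2)[of \<omega>] \<omega> by simp
  qed (use hf_bound in \<open>auto simp: S_def\<close>)
  have "{\<omega> \<in> G. t < \<bar>bh \<omega> - \<beta>d\<bar>} = {\<omega> \<in> G. \<beta>d + t < bh \<omega>} \<union> {\<omega> \<in> G. bh \<omega> < \<beta>d - t}"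
    by auto
  then have "measure S {\<omega> \<in> G. t < \<bar>bh \<omega> - \<beta>d\<bar>}
      \<le> measure S {\<omega> \<in> G. \<beta>d + t < bh \<omega>} + measure S {\<omega> \<in> G. bh \<omega> < \<beta>d - t}"
    using G_space by (simp only:) (intro measure_Un_le; measurable)
  also have "\<dots> \<le> 4 * 2\<^sup>2 / (card I * \<epsilon>\<^sup>2) + 4 * 2\<^sup>2 / (card I * \<epsilon>\<^sup>2)"
    using right left by (rule add_mono)
  finally show ?thesis by (simp add: add_divide_distrib[symmetric])
qed

section \<open>Rates in probability\<close>

lemma square_le_rate:
  fixes p q g a r D :: real and N :: nat
  assumes "p \<ge> 0" "q \<ge> 0" "g \<ge> 0" "a > 0" "r > 0" "N > 0" "D \<ge> 0"
    and D: "D \<le> p * a + q * r + g / sqrt N"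
  shows "D\<^sup>2 \<le> (p + q + g)\<^sup>2 * max (max (a\<^sup>2) (r\<^sup>2)) (1 / N)"
proof -
  define m where "m = sqrt (max (max (a\<^sup>2) (r\<^sup>2)) (1 / N))"
  have "a \<le> m" "r \<le> m" "1 / sqrt N \<le> m"
    using assms(4,5) unfolding m_def
    by (auto intro!: real_le_rsqrt simp: power_divide)
  then have "D \<le> (p + q + g) * m"
    using D assms(1-3) mult_left_mono[of a m p] mult_left_mono[of r m q] mult_left_mono[of "1 / sqrt N" m g]
    by (simp add: algebra_simps)
  then have "D\<^sup>2 \<le> ((p + q + g) * m)\<^sup>2" using \<open>D \<ge> 0\<close> by (rule power_mono)
  then show ?thesis by (simp add: power_mult_distrib m_def le_max_iff_disj)
qed

lemma bracket_width_rate: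
  fixes Ca Cr G c B M :: real and a r :: "nat \<Rightarrow> real"
  defines "t \<equiv> \<lambda>N. bracket_width c B (Ca * a N + M * (Cr * r N)) (Cr * r N) (G / sqrt N)"
  assumes nonneg: "Ca \<ge> 0" "Cr \<ge> 0" "G \<ge> 0" "B \<ge> 0" "M \<ge> 0" and c: "c > 0"
    and a: "\<And>N. a N > 0" "a \<longlonglongrightarrow> 0" and r: "\<And>N. r N > 0" "r \<longlonglongrightarrow> 0"
  shows "t \<longlonglongrightarrow> 0"
    and "\<exists>C. \<forall>N>0. 2 * B * (Ca * a N + M * (Cr * r N) + t N)\<^sup>2
                    \<le> C * max (max ((a N)\<^sup>2) ((r N)\<^sup>2)) (1 / N)"
proof -
  have "filterlim (\<lambda>N::nat. sqrt (real N)) at_infinity sequentially"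
    by (intro filterlim_at_top_imp_at_infinity filterlim_compose[OF sqrt_at_top filterlim_real_sequentially])
  then have "(\<lambda>N. G / sqrt N) \<longlonglongrightarrow> 0" by (rule tendsto_divide_0[OF tendsto_const])
  then have "t \<longlonglongrightarrow> 4 / c * (Cr * 0 + 8 * B * (Ca * 0 + M * (Cr * 0)) + 0) + 2 * (Ca * 0 + M * (Cr * 0))"
    unfolding t_def bracket_width_def by (intro tendsto_intros a(2) r(2))
  then show "t \<longlonglongrightarrow> 0" by simp
  define p where "p = Ca * (3 + 32 * B / c)"
  define q where "q = Cr * (3 * M + 4 / c + 32 * B * M / c)"
  define g where "g = 4 * G / c"
  have pqg: "p \<ge> 0" "q \<ge> 0" "g \<ge> 0" using nonneg c by (simp_all add: p_def q_def g_def)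
  have "2 * B * (Ca * a N + M * (Cr * r N) + t N)\<^sup>2
      \<le> 2 * B * (p + q + g)\<^sup>2 * max (max ((a N)\<^sup>2) ((r N)\<^sup>2)) (1 / N)" if "N > 0" for N
  proof -
    have eq: "Ca * a N + M * (Cr * r N) + t N = p * a N + q * r N + g / sqrt N"
      using c by (simp add: t_def bracket_width_def p_def q_def g_def field_simps)
    moreover have "p * a N + q * r N + g / sqrt N \<ge> 0"
      using pqg a(1)[of N] r(1)[of N] by simp
    ultimately show ?thesis
      using square_le_rate[OF pqg a(1) r(1) that, of "Ca * a N + M * (Cr * r N) + t N"] nonneg
      by (simp add: mult.assoc mult_left_mono)
  qed
  then show "\<exists>C. \<forall>N>0. 2 * B * (Ca * a N + M * (Cr * r N) + t N)\<^sup>2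
                    \<le> C * max (max ((a N)\<^sup>2) ((r N)\<^sup>2)) (1 / N)"
    by blast
qed

lemma fold_tail_bound_le:
  fixes K N n :: nat and \<eta> :: real
  assumes K: "K > 0" and \<eta>: "\<eta> > 0" and N: "2 * K \<le> N" and n: "N div K \<le> n"
  shows "32 / (n * (sqrt (64 * K / \<eta>) / sqrt N)\<^sup>2) \<le> \<eta>"
proof -
  have "2 \<le> N div K" using K N by (metis div_le_mono nonzero_mult_div_cancel_right not_gr0)
  have "N = K * (N div K) + N mod K" by simp
  moreover have "N mod K < K" "K * (N div K) \<le> K * n" using K n by simp_all
  ultimately have "N \<le> K * n + K" by linarith
  moreover have "K \<le> K * n" using \<open>2 \<le> N div K\<close> n by simp
  ultimately have "N \<le> 2 * (K * n)" by linarith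
  then have N_le: "real N \<le> 2 * K * n" by (metis of_nat_le_iff of_nat_mult of_nat_numeral mult.assoc)
  have "n > 0" "N > 0" using \<open>2 \<le> N div K\<close> n K N by auto
  have "32 / (n * (sqrt (64 * K / \<eta>) / sqrt N)\<^sup>2) = \<eta> * N / (2 * K * n)"
    using K \<eta> \<open>n > 0\<close> \<open>N > 0\<close> by (simp add: power_divide field_simps)
  also have "\<dots> \<le> \<eta> * (2 * K * n) / (2 * K * n)"
    using N_le \<eta> by (intro divide_right_mono mult_left_mono) auto
  also have "\<dots> = \<eta>" using K \<open>n > 0\<close> by simp
  finally show ?thesis .
qed

lemma OP_upperE:
  assumes "OP_upper \<Omega> Z r" "\<eta> > 0" "\<And>N. r N > 0"
  obtains C N0 where "C \<ge> 0"
    and "\<And>N. N \<ge> N0 \<Longrightarrow> \<exists>E\<in>sets (\<Omega> N). measure (\<Omega> N) E < \<eta> \<and> (\<forall>\<omega>\<in>space (\<Omega> N) - E. Z N \<omega> \<le> ereal (C * r N))"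
proof -
  obtain C N0 where C: "\<And>N. N \<ge> N0 \<Longrightarrow> \<exists>E\<in>sets (\<Omega> N).
      {\<omega> \<in> space (\<Omega> N). Z N \<omega> > ereal (C * r N)} \<subseteq> E \<and> measure (\<Omega> N) E < \<eta>"
    using assms(1,2) unfolding OP_upper_def by blast
  show ?thesis
  proof (rule that[of "max C 0" N0])
    fix N assume "N \<ge> N0"
    then obtain E where E: "E \<in> sets (\<Omega> N)" "{\<omega> \<in> space (\<Omega> N). Z N \<omega> > ereal (C * r N)} \<subseteq> E"
      "measure (\<Omega> N) E < \<eta>"
      using C by blast
    have "ereal (C * r N) \<le> ereal (max C 0 * r N)"
      using assms(3)[of N] by (simp add: mult_right_mono)
    moreover have "Z N \<omega> \<le> ereal (C * r N)" if "\<omega> \<in> space (\<Omega> N) - E" for \<omega>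
      using E(2) that by (auto simp: not_less)
    ultimately have "Z N \<omega> \<le> ereal (max C 0 * r N)" if "\<omega> \<in> space (\<Omega> N) - E" for \<omega>
      using that order_trans by blast
    then show "\<exists>E\<in>sets (\<Omega> N). measure (\<Omega> N) E < \<eta> \<and> (\<forall>\<omega>\<in>space (\<Omega> N) - E. Z N \<omega> \<le> ereal (max C 0 * r N))"
      using E(1,3) by blast
  qed simp
qed

lemma OP_upper_mono:
  assumes "OP_upper \<Omega> Z r" and "\<And>N \<omega>. \<omega> \<in> space (\<Omega> N) \<Longrightarrow> Z' N \<omega> \<le> Z N \<omega>"
  shows "OP_upper \<Omega> Z' r"
  unfolding OP_upper_def
proof (intro allI impI)
  fix \<eta> :: real assume "\<eta> > 0"
  then obtain C N0 where C: "\<forall>N\<ge>N0. \<exists>E\<in>sets (\<Omega> N).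
      {\<omega> \<in> space (\<Omega> N). Z N \<omega> > ereal (C * r N)} \<subseteq> E \<and> measure (\<Omega> N) E < \<eta>"
    using assms(1) unfolding OP_upper_def by blast
  have "{\<omega> \<in> space (\<Omega> N). Z' N \<omega> > ereal (C * r N)} \<subseteq> {\<omega> \<in> space (\<Omega> N). Z N \<omega> > ereal (C * r N)}" for N
    using assms(2) by (auto intro: less_le_trans)
  with C show "\<exists>C N0. \<forall>N\<ge>N0. \<exists>E\<in>sets (\<Omega> N).
      {\<omega> \<in> space (\<Omega> N). Z' N \<omega> > ereal (C * r N)} \<subseteq> E \<and> measure (\<Omega> N) E < \<eta>"
    by (meson order_trans)
qed

lemma OP_upper_given_nuisance_events:
  fixes Z Z1 Z2 :: "nat \<Rightarrow> 'w \<Rightarrow> ereal" and a r s :: "nat \<Rightarrow> real"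
  assumes Z1: "OP_upper \<Omega> Z1 a" and Z2: "OP_upper \<Omega> Z2 r" and a: "\<And>N. a N > 0" and r: "\<And>N. r N > 0"
    and bound: "\<And>Ca Cr \<eta>. Ca \<ge> 0 \<Longrightarrow> Cr \<ge> 0 \<Longrightarrow> \<eta> > 0 \<Longrightarrow> \<exists>C N0. \<forall>N\<ge>N0. \<forall>G\<in>sets (\<Omega> N).
       (\<forall>\<omega>\<in>G. Z1 N \<omega> \<le> ereal (Ca * a N) \<and> Z2 N \<omega> \<le> ereal (Cr * r N)) \<longrightarrow>
       (\<exists>E\<in>sets (\<Omega> N). measure (\<Omega> N) E \<le> \<eta> \<and> {\<omega> \<in> G. Z N \<omega> > ereal (C * s N)} \<subseteq> E)"
  shows "OP_upper \<Omega> Z s"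
  unfolding OP_upper_def
proof (intro allI impI)
  fix \<eta> :: real assume "\<eta> > 0"
  obtain Ca Na where "Ca \<ge> 0" and Z1_small: "\<And>N. N \<ge> Na \<Longrightarrow> \<exists>E\<in>sets (\<Omega> N).
      measure (\<Omega> N) E < \<eta> / 4 \<and> (\<forall>\<omega>\<in>space (\<Omega> N) - E. Z1 N \<omega> \<le> ereal (Ca * a N))"
    using OP_upperE[OF Z1 _ a, of "\<eta> / 4"] \<open>\<eta> > 0\<close> by auto
  obtain Cr Nr where "Cr \<ge> 0" and Z2_small: "\<And>N. N \<ge> Nr \<Longrightarrow> \<exists>E\<in>sets (\<Omega> N).
      measure (\<Omega> N) E < \<eta> / 4 \<and> (\<forall>\<omega>\<in>space (\<Omega> N) - E. Z2 N \<omega> \<le> ereal (Cr * r N))"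
    using OP_upperE[OF Z2 _ r, of "\<eta> / 4"] \<open>\<eta> > 0\<close> by auto
  obtain C N0 where C: "\<forall>N\<ge>N0. \<forall>G\<in>sets (\<Omega> N).
      (\<forall>\<omega>\<in>G. Z1 N \<omega> \<le> ereal (Ca * a N) \<and> Z2 N \<omega> \<le> ereal (Cr * r N)) \<longrightarrow>
      (\<exists>E\<in>sets (\<Omega> N). measure (\<Omega> N) E \<le> \<eta> / 4 \<and> {\<omega> \<in> G. Z N \<omega> > ereal (C * s N)} \<subseteq> E)"
    using bound[OF \<open>Ca \<ge> 0\<close> \<open>Cr \<ge> 0\<close>, of "\<eta> / 4"] \<open>\<eta> > 0\<close> by (meson divide_pos_pos zero_less_numeral)
  show "\<exists>C N0. \<forall>N\<ge>N0. \<exists>E\<in>sets (\<Omega> N). {\<omega> \<in> space (\<Omega> N). Z N \<omega> > ereal (C * s N)} \<subseteq> E \<and> measure (\<Omega> N) E < \<eta>"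
  proof (intro exI[of _ C] exI[of _ "max N0 (max Na Nr)"] allI impI)
    fix N assume N: "max N0 (max Na Nr) \<le> N"
    obtain Ea Er where Ea: "Ea \<in> sets (\<Omega> N)" "measure (\<Omega> N) Ea < \<eta> / 4"
        "\<forall>\<omega>\<in>space (\<Omega> N) - Ea. Z1 N \<omega> \<le> ereal (Ca * a N)"
      and Er: "Er \<in> sets (\<Omega> N)" "measure (\<Omega> N) Er < \<eta> / 4"
        "\<forall>\<omega>\<in>space (\<Omega> N) - Er. Z2 N \<omega> \<le> ereal (Cr * r N)"
      using Z1_small[of N] Z2_small[of N] N by auto
    obtain E where E: "E \<in> sets (\<Omega> N)" "measure (\<Omega> N) E \<le> \<eta> / 4"
      "{\<omega> \<in> space (\<Omega> N) - (Ea \<union> Er). Z N \<omega> > ereal (C * s N)} \<subseteq> E"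
      using C[rule_format, of N "space (\<Omega> N) - (Ea \<union> Er)"] N Ea Er by auto
    have "measure (\<Omega> N) (Ea \<union> Er \<union> E) \<le> measure (\<Omega> N) Ea + measure (\<Omega> N) Er + measure (\<Omega> N) E"
      using Ea(1) Er(1) E(1) by (meson add_right_mono measure_Un_le order_trans sets.Un)
    then have "measure (\<Omega> N) (Ea \<union> Er \<union> E) < \<eta>"
      using Ea(2) Er(2) E(2) \<open>\<eta> > 0\<close> by linarith
    moreover have "{\<omega> \<in> space (\<Omega> N). Z N \<omega> > ereal (C * s N)} \<subseteq> Ea \<union> Er \<union> E"
      using E(3) by blast
    ultimately show "\<exists>E\<in>sets (\<Omega> N). {\<omega> \<in> space (\<Omega> N). Z N \<omega> > ereal (C * s N)} \<subseteq> E \<and> measure (\<Omega> N) E < \<eta>"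
      using Ea(1) Er(1) E(1) by blast
  qed
qed

lemma abs_le_if_sup_dist_le:
  assumes "sup_dist PX f g \<le> ereal C" and "x \<in> space PX"
  shows "\<bar>f x - g x\<bar> \<le> C"
proof -
  have "ereal \<bar>f x - g x\<bar> \<le> sup_dist PX f g"
    unfolding sup_dist_def using assms(2) by (rule SUP_upper)
  also have "\<dots> \<le> ereal C" by (fact assms(1))
  finally show ?thesis by simp
qed

section \<open>Cross-fitting\<close>

locale cross_fitting =
  fixes PX :: "'x measure" and \<kappa> :: "'x \<Rightarrow> (bool \<times> bool \<times> bool) pmf"
    and lam M \<beta>d c B \<delta> :: real and K :: nat and I :: "nat \<Rightarrow> nat set"
    and tf hf :: "nat \<Rightarrow> (nat \<Rightarrow> 'x obs) \<Rightarrow> 'x \<Rightarrow> real" and bh :: "nat \<Rightarrow> (nat \<Rightarrow> 'x obs) \<Rightarrow> real"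
  assumes PX: "prob_space PX"
    and kappa_meas: "\<And>t. (\<lambda>x. pmf (\<kappa> x) t) \<in> borel_measurable PX"
    and margin: "\<And>u. u \<ge> 0 \<Longrightarrow> measure PX {x \<in> space PX. \<bar>tau \<kappa> x - \<beta>d * THR \<kappa> x\<bar> \<le> u} \<le> 2 * B * u"
    and B_nonneg: "B \<ge> 0"
    and crossing: "\<And>h. 0 < h \<Longrightarrow> h < \<delta> \<Longrightarrow>
       Psi PX \<kappa> lam (\<beta>d + h) \<le> - (c * h / 2) \<and> c * h / 2 \<le> Psi PX \<kappa> lam (\<beta>d - h)"
    and \<delta>_pos: "\<delta> > 0" and interior: "0 < \<beta>d" "\<beta>d < M" and c_pos: "c > 0"
    and K_pos: "K > 0" and fold: "\<And>N. I N \<subseteq> {..<N}" "\<And>N. N div K \<le> card (I N)"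
    and trained_off_fold: "\<And>N \<omega> \<omega>'. \<omega> \<in> space (sample_space PX \<kappa> N) \<Longrightarrow> \<omega>' \<in> space (sample_space PX \<kappa> N) \<Longrightarrow>
       (\<forall>i\<in>{..<N} - I N. \<omega> i = \<omega>' i) \<Longrightarrow> tf N \<omega> = tf N \<omega>' \<and> hf N \<omega> = hf N \<omega>'"
    and est_meas: "\<And>N. (\<lambda>(\<omega>, x). tf N \<omega> x) \<in> borel_measurable (sample_space PX \<kappa> N \<Otimes>\<^sub>M PX)"
      "\<And>N. (\<lambda>(\<omega>, x). hf N \<omega> x) \<in> borel_measurable (sample_space PX \<kappa> N \<Otimes>\<^sub>M PX)"
    and bh_meas: "\<And>N. bh N \<in> borel_measurable (sample_space PX \<kappa> N)"
    and bh_range: "\<And>N \<omega>. \<omega> \<in> space (sample_space PX \<kappa> N) \<Longrightarrow> bh N \<omega> \<in> {0..M}"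
    and root: "\<And>N \<omega> \<beta>. \<omega> \<in> space (sample_space PX \<kappa> N) \<Longrightarrow> \<beta> \<in> {0..M} \<Longrightarrow>
       (\<beta> < bh N \<omega> \<longrightarrow> lam \<le> Psi_hat (I N) (hf N \<omega>) (tf N \<omega>) \<omega> \<beta>) \<and>
       (bh N \<omega> < \<beta> \<longrightarrow> Psi_hat (I N) (hf N \<omega>) (tf N \<omega>) \<omega> \<beta> \<le> lam)"
begin

lemma regret_tail_cover:
  fixes N :: nat and \<alpha> \<rho> \<eta> t :: real
  assumes \<eta>: "\<eta> > 0" and N: "2 * K \<le> N"
    and t_eq: "t = bracket_width c B (\<alpha> + M * \<rho>) \<rho> (sqrt (64 * K / \<eta>) / sqrt N)"
    and pos: "0 \<le> \<alpha>" "0 \<le> \<rho>" "\<rho> \<le> 1"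
    and t: "t < \<delta>" "t \<le> \<beta>d" "\<beta>d + t \<le> M" and G: "G \<in> sets (sample_space PX \<kappa> N)"
    and good: "\<And>\<omega> x. \<omega> \<in> G \<Longrightarrow> x \<in> space PX \<Longrightarrow> \<bar>tf N \<omega> x - tau \<kappa> x\<bar> \<le> \<alpha> \<and> \<bar>hf N \<omega> x - THR \<kappa> x\<bar> \<le> \<rho>"
  obtains E where "E \<in> sets (sample_space PX \<kappa> N)" and "measure (sample_space PX \<kappa> N) E \<le> \<eta>"
    and "{\<omega> \<in> G. 2 * B * (\<alpha> + M * \<rho> + t)\<^sup>2 < regret PX \<kappa> \<beta>d (tf N \<omega>) (hf N \<omega>) (bh N \<omega>)} \<subseteq> E"
proof
  let ?\<epsilon> = "sqrt (64 * K / \<eta>) / sqrt N"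
  have "M \<ge> 0" using interior by simp
  have "N > 0" "?\<epsilon> > 0" using N K_pos \<eta> by auto
  have "t > 0" using bracket_width_slack(1)[of c B "\<alpha> + M * \<rho>" \<rho> ?\<epsilon>] pos c_pos B_nonneg \<open>M \<ge> 0\<close> \<open>?\<epsilon> > 0\<close>
    by (simp add: t_eq)
  have "I N \<noteq> {}" using fold(2)[of N] div_le_mono[OF N, of K] K_pos by auto
  have sections: "tf N \<omega> \<in> borel_measurable PX \<and> hf N \<omega> \<in> borel_measurable PX"
    if "\<omega> \<in> space (sample_space PX \<kappa> N)" for \<omega>
    using measurable_Pair2[OF est_meas(1) that] measurable_Pair2[OF est_meas(2) that] by simp
  have [measurable]: "G \<in> sets (sample_space PX \<kappa> N)" "bh N \<in> borel_measurable (sample_space PX \<kappa> N)"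
    by (fact G bh_meas)+
  show "{\<omega> \<in> G. t < \<bar>bh N \<omega> - \<beta>d\<bar>} \<in> sets (sample_space PX \<kappa> N)"
    using sets.sets_into_space[OF G] by measurable
  have "measure (sample_space PX \<kappa> N) {\<omega> \<in> G. t < \<bar>bh N \<omega> - \<beta>d\<bar>} \<le> 32 / (card (I N) * ?\<epsilon>\<^sup>2)"
    using crossing[of "t / 2"] \<open>t > 0\<close> t \<open>?\<epsilon> > 0\<close> unfolding t_eq
    by (intro measure_root_outside_bracket_le[OF PX kappa_meas margin _ _ _ _ c_pos B_nonneg \<open>M \<ge> 0\<close> pos
          _ fold(1) \<open>I N \<noteq> {}\<close> trained_off_fold sections bh_meas root G good]) simp_all
  also have "\<dots> \<le> \<eta>" by (rule fold_tail_bound_le[OF K_pos \<eta> N fold(2)])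
  finally show "measure (sample_space PX \<kappa> N) {\<omega> \<in> G. t < \<bar>bh N \<omega> - \<beta>d\<bar>} \<le> \<eta>" .
  show "{\<omega> \<in> G. 2 * B * (\<alpha> + M * \<rho> + t)\<^sup>2 < regret PX \<kappa> \<beta>d (tf N \<omega>) (hf N \<omega>) (bh N \<omega>)}
      \<subseteq> {\<omega> \<in> G. t < \<bar>bh N \<omega> - \<beta>d\<bar>}"
  proof (safe, rule ccontr)
    fix \<omega> assume \<omega>: "\<omega> \<in> G" and "\<not> t < \<bar>bh N \<omega> - \<beta>d\<bar>"
      and big: "2 * B * (\<alpha> + M * \<rho> + t)\<^sup>2 < regret PX \<kappa> \<beta>d (tf N \<omega>) (hf N \<omega>) (bh N \<omega>)"
    have \<omega>_space: "\<omega> \<in> space (sample_space PX \<kappa> N)" using \<omega> sets.sets_into_space[OF G] by blast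
    have "regret PX \<kappa> \<beta>d (tf N \<omega>) (hf N \<omega>) (bh N \<omega>) \<le> (\<alpha> + M * \<rho> + t) * (2 * B * (\<alpha> + M * \<rho> + t))"
      using \<open>\<not> t < \<bar>bh N \<omega> - \<beta>d\<bar>\<close> sections[OF \<omega>_space] good[OF \<omega>] bh_range[OF \<omega>_space]
        pos \<open>t > 0\<close> \<open>M \<ge> 0\<close>
      by (intro regret_le_margin_mass[OF PX kappa_meas] margin) auto
    moreover have "(\<alpha> + M * \<rho> + t) * (2 * B * (\<alpha> + M * \<rho> + t)) = 2 * B * (\<alpha> + M * \<rho> + t)\<^sup>2"
      by (simp add: power2_eq_square)
    ultimately show False using big by linarith
  qed
qed

lemma regret_OP_upper:
  fixes a r :: "nat \<Rightarrow> real"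
  assumes a: "\<And>N. a N > 0" "a \<longlonglongrightarrow> 0" and r: "\<And>N. r N > 0" "r \<longlonglongrightarrow> 0"
    and tau_rate: "OP_upper (sample_space PX \<kappa>) (\<lambda>N \<omega>. sup_dist PX (tf N \<omega>) (tau \<kappa>)) a"
    and THR_rate: "OP_upper (sample_space PX \<kappa>) (\<lambda>N \<omega>. sup_dist PX (hf N \<omega>) (THR \<kappa>)) r"
  shows "OP_upper (sample_space PX \<kappa>) (\<lambda>N \<omega>. ereal (regret PX \<kappa> \<beta>d (tf N \<omega>) (hf N \<omega>) (bh N \<omega>)))
           (\<lambda>N. max (max ((a N)\<^sup>2) ((r N)\<^sup>2)) (1 / real N))"
proof (rule OP_upper_given_nuisance_events[OF tau_rate THR_rate a(1) r(1)])
  fix Ca Cr \<eta> :: real assume "Ca \<ge> 0" "Cr \<ge> 0" "\<eta> > 0"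
  define t where "t N = bracket_width c B (Ca * a N + M * (Cr * r N)) (Cr * r N) (sqrt (64 * K / \<eta>) / sqrt N)"
    for N :: nat
  have "M \<ge> 0" "sqrt (64 * K / \<eta>) \<ge> 0" using interior \<open>\<eta> > 0\<close> by auto
  note rate = bracket_width_rate[OF \<open>Ca \<ge> 0\<close> \<open>Cr \<ge> 0\<close> \<open>sqrt (64 * K / \<eta>) \<ge> 0\<close> B_nonneg \<open>M \<ge> 0\<close> c_pos a r]
  obtain C where C: "\<And>N. N > 0 \<Longrightarrow> 2 * B * (Ca * a N + M * (Cr * r N) + t N)\<^sup>2
      \<le> C * max (max ((a N)\<^sup>2) ((r N)\<^sup>2)) (1 / N)"
    using rate(2) unfolding t_def by blast
  have "t \<longlonglongrightarrow> 0" using rate(1) unfolding t_def[abs_def] .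
  then have "eventually (\<lambda>N. t N < min \<delta> (min \<beta>d (M - \<beta>d)) \<and> Cr * r N < 1) sequentially"
    using \<delta>_pos interior
    by (intro eventually_conj order_tendstoD(2) order_tendstoD(2)[OF tendsto_mult_right_zero[OF r(2)]]) auto
  then obtain N1 where N1: "\<And>N. N \<ge> N1 \<Longrightarrow> t N < min \<delta> (min \<beta>d (M - \<beta>d)) \<and> Cr * r N < 1"
    unfolding eventually_sequentially by blast
  show "\<exists>C N0. \<forall>N\<ge>N0. \<forall>G\<in>sets (sample_space PX \<kappa> N).
      (\<forall>\<omega>\<in>G. sup_dist PX (tf N \<omega>) (tau \<kappa>) \<le> ereal (Ca * a N) \<and> sup_dist PX (hf N \<omega>) (THR \<kappa>) \<le> ereal (Cr * r N)) \<longrightarrow>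
      (\<exists>E\<in>sets (sample_space PX \<kappa> N). measure (sample_space PX \<kappa> N) E \<le> \<eta> \<and>
        {\<omega> \<in> G. ereal (regret PX \<kappa> \<beta>d (tf N \<omega>) (hf N \<omega>) (bh N \<omega>))
          > ereal (C * max (max ((a N)\<^sup>2) ((r N)\<^sup>2)) (1 / N))} \<subseteq> E)"
  proof (intro exI[of _ C] exI[of _ "max N1 (2 * K)"] allI impI ballI)
    fix N G assume N: "max N1 (2 * K) \<le> N" and G: "G \<in> sets (sample_space PX \<kappa> N)"
      and errors: "\<forall>\<omega>\<in>G. sup_dist PX (tf N \<omega>) (tau \<kappa>) \<le> ereal (Ca * a N)
        \<and> sup_dist PX (hf N \<omega>) (THR \<kappa>) \<le> ereal (Cr * r N)"
    have good: "\<bar>tf N \<omega> x - tau \<kappa> x\<bar> \<le> Ca * a N \<and> \<bar>hf N \<omega> x - THR \<kappa> x\<bar> \<le> Cr * r N"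
      if "\<omega> \<in> G" "x \<in> space PX" for \<omega> x
      using abs_le_if_sup_dist_le[of PX "tf N \<omega>" "tau \<kappa>" "Ca * a N" x]
        abs_le_if_sup_dist_le[of PX "hf N \<omega>" "THR \<kappa>" "Cr * r N" x] errors that by blast
    obtain E where "E \<in> sets (sample_space PX \<kappa> N)" "measure (sample_space PX \<kappa> N) E \<le> \<eta>"
      and cover: "{\<omega> \<in> G. 2 * B * (Ca * a N + M * (Cr * r N) + t N)\<^sup>2
          < regret PX \<kappa> \<beta>d (tf N \<omega>) (hf N \<omega>) (bh N \<omega>)} \<subseteq> E"
    proof (rule regret_tail_cover[where \<alpha> = "Ca * a N" and \<rho> = "Cr * r N" and t = "t N", OF \<open>\<eta> > 0\<close> _ t_def])
      show "0 \<le> Ca * a N" "0 \<le> Cr * r N" using \<open>Ca \<ge> 0\<close> \<open>Cr \<ge> 0\<close> a(1)[of N] r(1)[of N] by simp_all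
    qed (use N N1[of N] G good that in auto)
    moreover have "N > 0" using N K_pos by simp
    ultimately show "\<exists>E\<in>sets (sample_space PX \<kappa> N). measure (sample_space PX \<kappa> N) E \<le> \<eta> \<and>
        {\<omega> \<in> G. ereal (regret PX \<kappa> \<beta>d (tf N \<omega>) (hf N \<omega>) (bh N \<omega>))
          > ereal (C * max (max ((a N)\<^sup>2) ((r N)\<^sup>2)) (1 / N))} \<subseteq> E"
      using C[of N] by (intro bexI[of _ E] conjI) (auto simp: not_le intro!: order.strict_trans1)
  qed
qed

end

theorem theorem3:
  fixes PX :: "'x measure" and \<kappa> :: "'x \<Rightarrow> (bool \<times> bool \<times> bool) pmf"
    and lam M \<beta>d c :: real and K k :: nat
    and fld :: "nat \<Rightarrow> nat \<Rightarrow> nat"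
    and tauhat THRhat :: "nat \<Rightarrow> nat \<Rightarrow> (nat \<Rightarrow> 'x obs) \<Rightarrow> 'x \<Rightarrow> real"
    and betahat :: "nat \<Rightarrow> (nat \<Rightarrow> 'x obs) \<Rightarrow> real"
    and a r :: "nat \<Rightarrow> real"
  assumes PX: "prob_space PX"
    and kappa_meas: "\<forall>t. (\<lambda>x. pmf (\<kappa> x) t) \<in> borel_measurable PX"
    \<comment> \<open>Assumption 1: ignorability and positivity\<close>
    and ignorability: "\<forall>x\<in>space PX. \<kappa> x = pair_pmf (map_pmf fst (\<kappa> x)) (map_pmf snd (\<kappa> x))"
    and positivity: "\<exists>\<epsilon>. 0 < \<epsilon> \<and> \<epsilon> < 1/2 \<and>
                       (\<forall>x\<in>space PX. \<epsilon> < propensity \<kappa> x \<and> propensity \<kappa> x < 1 - \<epsilon>)"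
    \<comment> \<open>Condition 1\<close>
    and root: "Psi PX \<kappa> lam \<beta>d = 0"
    and interior: "0 < \<beta>d" "\<beta>d < M"
    and c_pos: "c > 0"
    and C1: "\<exists>\<delta>>0. \<exists>dPsi. (\<forall>\<beta>. \<bar>\<beta> - \<beta>d\<bar> < \<delta> \<longrightarrow>
                  (Psi PX \<kappa> lam has_real_derivative dPsi \<beta>) (at \<beta>))
               \<and> continuous_on {\<beta>d - \<delta><..<\<beta>d + \<delta>} dPsi \<and> \<bar>dPsi \<beta>d\<bar> \<ge> c"
    \<comment> \<open>Condition 2\<close>
    and C2: "\<forall>\<beta>. \<exists>f B. f \<in> borel_measurable lborel \<and> (\<forall>t. 0 \<le> f t \<and> f t \<le> B) \<and>
               distr PX lborel (\<lambda>x. tau \<kappa> x - \<beta> * THR \<kappa> x) = density lborel (\<lambda>t. ennreal (f t))"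
    \<comment> \<open>sample splitting into K balanced folds; k is the fixed fold\<close>
    and K_pos: "0 < K" and k_lt: "k < K"
    and fold_range: "\<forall>N i. i < N \<longrightarrow> fld N i < K"
    and fold_size: "\<forall>N j. j < K \<longrightarrow> N div K \<le> card (fold_set (fld N) N j)
                                   \<and> card (fold_set (fld N) N j) \<le> N div K + 1"
    \<comment> \<open>nuisance estimators fitted on the complement of fold j\<close>
    and training_only: "\<forall>N j \<omega> \<omega>'. j < K \<longrightarrow> \<omega> \<in> space (sample_space PX \<kappa> N) \<longrightarrow>
               \<omega>' \<in> space (sample_space PX \<kappa> N) \<longrightarrow> (\<forall>i<N. fld N i \<noteq> j \<longrightarrow> \<omega> i = \<omega>' i) \<longrightarrow>
               tauhat N j \<omega> = tauhat N j \<omega>' \<and> THRhat N j \<omega> = THRhat N j \<omega>'"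
    and est_meas: "\<forall>N j. j < K \<longrightarrow>
               (\<lambda>(\<omega>, x). tauhat N j \<omega> x) \<in> borel_measurable (sample_space PX \<kappa> N \<Otimes>\<^sub>M PX) \<and>
               (\<lambda>(\<omega>, x). THRhat N j \<omega> x) \<in> borel_measurable (sample_space PX \<kappa> N \<Otimes>\<^sub>M PX)"
    \<comment> \<open>beta-hat on fold k: a (generalized) root in [0,M] of the monotone estimating equation\<close>
    and betahat_meas: "\<forall>N. betahat N \<in> borel_measurable (sample_space PX \<kappa> N)"
    and betahat_root: "\<forall>N \<omega>. \<omega> \<in> space (sample_space PX \<kappa> N) \<longrightarrow>
               betahat N \<omega> \<in> {0..M} \<and>
               (\<forall>\<beta>\<in>{0..M}. \<beta> < betahat N \<omega> \<longrightarrow>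
                  Psi_hat (fold_set (fld N) N k) (THRhat N k \<omega>) (tauhat N k \<omega>) \<omega> \<beta> \<ge> lam) \<and>
               (\<forall>\<beta>\<in>{0..M}. betahat N \<omega> < \<beta> \<longrightarrow>
                  Psi_hat (fold_set (fld N) N k) (THRhat N k \<omega>) (tauhat N k \<omega>) \<omega> \<beta> \<le> lam)"
    \<comment> \<open>Condition 3\<close>
    and a_pos: "\<forall>N. a N > 0" and a_lim: "a \<longlonglongrightarrow> 0"
    and r_pos: "\<forall>N. r N > 0" and r_lim: "r \<longlonglongrightarrow> 0"
    and tau_rate: "OP_upper (sample_space PX \<kappa>)
               (\<lambda>N \<omega>. SUP j\<in>{..<K}. sup_dist PX (tauhat N j \<omega>) (tau \<kappa>)) a"
    and THR_rate: "OP_upper (sample_space PX \<kappa>)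
               (\<lambda>N \<omega>. SUP j\<in>{..<K}. sup_dist PX (THRhat N j \<omega>) (THR \<kappa>)) r"
  shows "OP_upper (sample_space PX \<kappa>)
           (\<lambda>N \<omega>. ereal (utility PX \<kappa> \<beta>d (rule (tau \<kappa>) (THR \<kappa>) \<beta>d)
                         - utility PX \<kappa> \<beta>d (rule (tauhat N k \<omega>) (THRhat N k \<omega>) (betahat N \<omega>))))
           (\<lambda>N. max (max ((a N)\<^sup>2) ((r N)\<^sup>2)) (1 / real N))"
proof -
  note \<kappa> = kappa_meas[rule_format]
  obtain D where "(Psi PX \<kappa> lam has_real_derivative D) (at \<beta>d)" "\<bar>D\<bar> \<ge> c"
    using C1 by force
  then obtain \<delta> where "\<delta> > 0" and crossing: "\<And>h. 0 < h \<Longrightarrow> h < \<delta> \<Longrightarrow>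
      Psi PX \<kappa> lam (\<beta>d + h) \<le> - (c * h / 2) \<and> c * h / 2 \<le> Psi PX \<kappa> lam (\<beta>d - h)"
    using Psi_linear_crossing[OF PX \<kappa> root _ _ c_pos] by blast
  obtain f B where f: "f \<in> borel_measurable lborel" "\<And>t. 0 \<le> f t \<and> f t \<le> B"
    and "distr PX lborel (\<lambda>x. tau \<kappa> x - \<beta>d * THR \<kappa> x) = density lborel (\<lambda>t. ennreal (f t))"
    using C2 by blast
  moreover have "(\<lambda>x. tau \<kappa> x - \<beta>d * THR \<kappa> x) \<in> borel_measurable PX"
    using borel_measurable_tau[OF \<kappa>] borel_measurable_THR[OF \<kappa>] by measurable
  ultimately have margin: "\<And>u. u \<ge> 0 \<Longrightarrow>
      measure PX {x \<in> space PX. \<bar>tau \<kappa> x - \<beta>d * THR \<kappa> x\<bar> \<le> u} \<le> 2 * B * u"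
    using measure_abs_le_bounded_density[OF PX _ f] by blast
  interpret cross_fitting PX \<kappa> lam M \<beta>d c B \<delta> K "\<lambda>N. fold_set (fld N) N k"
    "\<lambda>N. tauhat N k" "\<lambda>N. THRhat N k" betahat
  proof (rule cross_fitting.intro)
    show "B \<ge> 0" using f(2) order_trans by blast
    show "fold_set (fld N) N k \<subseteq> {..<N}" "N div K \<le> card (fold_set (fld N) N k)" for N
      using fold_size k_lt by (auto simp: fold_set_def)
    show "tauhat N k \<omega> = tauhat N k \<omega>' \<and> THRhat N k \<omega> = THRhat N k \<omega>'"
      if "\<omega> \<in> space (sample_space PX \<kappa> N)" "\<omega>' \<in> space (sample_space PX \<kappa> N)"
        "\<forall>i\<in>{..<N} - fold_set (fld N) N k. \<omega> i = \<omega>' i" for N \<omega> \<omega>'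
    proof -
      have "\<forall>i<N. fld N i \<noteq> k \<longrightarrow> \<omega> i = \<omega>' i" using that(3) by (simp add: fold_set_def)
      then show ?thesis using training_only k_lt that(1,2) by blast
    qed
    show "(\<lambda>(\<omega>, x). tauhat N k \<omega> x) \<in> borel_measurable (sample_space PX \<kappa> N \<Otimes>\<^sub>M PX)"
      "(\<lambda>(\<omega>, x). THRhat N k \<omega> x) \<in> borel_measurable (sample_space PX \<kappa> N \<Otimes>\<^sub>M PX)" for N
      using est_meas k_lt by simp_all
    show "betahat N \<omega> \<in> {0..M}" if "\<omega> \<in> space (sample_space PX \<kappa> N)" for N \<omega>
      using betahat_root that by simp
    show "(\<beta> < betahat N \<omega> \<longrightarrow> lam \<le> Psi_hat (fold_set (fld N) N k) (THRhat N k \<omega>) (tauhat N k \<omega>) \<omega> \<beta>) \<and>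
        (betahat N \<omega> < \<beta> \<longrightarrow> Psi_hat (fold_set (fld N) N k) (THRhat N k \<omega>) (tauhat N k \<omega>) \<omega> \<beta> \<le> lam)"
      if "\<omega> \<in> space (sample_space PX \<kappa> N)" "\<beta> \<in> {0..M}" for N \<omega> \<beta>
      using betahat_root that by simp
  qed (fact PX \<kappa> margin \<open>\<delta> > 0\<close> crossing interior c_pos K_pos betahat_meas[rule_format])+
  have "OP_upper (sample_space PX \<kappa>) (\<lambda>N \<omega>. sup_dist PX (tauhat N k \<omega>) (tau \<kappa>)) a"
    "OP_upper (sample_space PX \<kappa>) (\<lambda>N \<omega>. sup_dist PX (THRhat N k \<omega>) (THR \<kappa>)) r"
    using k_lt by (intro OP_upper_mono[OF tau_rate] OP_upper_mono[OF THR_rate] SUP_upper; simp)+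
  then show ?thesis
    using regret_OP_upper a_pos a_lim r_pos r_lim by (simp add: regret_def)
qed

end
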